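(* Let $\Lambda=kQ/I(n;n',n'';V)$ with $m=\min(n',n'')$, $d=\dim_kV/(\beta^m)$, and suppose $V$ is an ideal of $k[\beta]$, i.e. $V=(\beta^{m-d})$, and that $\delta=\gcd(n,n',n'')$ divides $d$. Then $$\dim_k\mathrm{HH}^1(\Lambda)=(n-1)+(m-1)+c>0.$$ In particular, if $m=1$ then $\dim_k\mathrm{HH}^1(\Lambda)=n-1$.
   Context: $k$ is a field; $Q$ is the quiver with vertices $1,2,3$ and arrows $\alpha\colon 2\to1$, $\beta\colon 2\to 2$, $\gamma\colon 3\to 2$; $kQ$ is generated by pairwise orthogonal idempotents $e_1,e_2,e_3$ (sum $1$) and $\alpha,\beta,\gamma$ with $e_1\alpha=\alpha=\alpha e_2$, $e_2\beta=\beta=\beta e_2$, $e_3\gamma=\gamma=\gamma e_2$, $\gamma\alpha=\beta\alpha=\gamma\beta=0$; for $v=\sum_iv_i\beta^i\in k[\beta]$, $\alpha v\gamma=\sum_iv_i\alpha\beta^i\gamma$. For integers $n\ge 2$, $1\le n',n''\le n$, $m=\min(n',n'')$ and a $k$-subspace $V\subseteq k[\beta]$ containing $(\beta^m)$, $I(n;n',n'';V)$ is the two-sided ideal of $kQ$ generated by $\alpha\beta^{n'}$, $\beta^n$, $\beta^{n''}\gamma$ and all $\alpha v\gamma$, $v\in V$. $c=1$ if $\delta=0$ in $k$ and $c=0$ otherwise. $\mathrm{HH}^1(\Lambda)=\mathrm{Der}_k(\Lambda,\Lambda)/\mathrm{Inn}(\Lambda)$. *)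

theory Defs
  imports Main "HOL-Computational_Algebra.Polynomial"
begin

datatype arrow = Al | Be | Ga

fun asrc :: "arrow \<Rightarrow> nat" where
  "asrc Al = 2" | "asrc Be = 2" | "asrc Ga = 3"

fun atgt :: "arrow \<Rightarrow> nat" where
  "atgt Al = 1" | "atgt Be = 2" | "atgt Ga = 2"

text \<open>Paths: trivial paths e_v, or words a_1 a_2 ... a_r read as products in kQ,
  i.e. composition right-to-left (so e_1 alpha = alpha = alpha e_2): the word is a
  path iff the source of a_i equals the target of a_(i+1).\<close>

datatype path = Triv nat | Pth "arrow list"

fun ptgt :: "path \<Rightarrow> nat" where
  "ptgt (Triv v) = v" | "ptgt (Pth xs) = atgt (hd xs)"

fun psrc :: "path \<Rightarrow> nat" where
  "psrc (Triv v) = v" | "psrc (Pth xs) = asrc (last xs)"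

definition valid_path :: "path \<Rightarrow> bool" where
  "valid_path p = (case p of Triv v \<Rightarrow> v \<in> {1,2,3}
     | Pth xs \<Rightarrow> xs \<noteq> [] \<and> (\<forall>i. Suc i < length xs \<longrightarrow> asrc (xs ! i) = atgt (xs ! Suc i)))"

fun pcat :: "path \<Rightarrow> path \<Rightarrow> path" where
  "pcat (Triv v) q = q"
| "pcat p (Triv v) = p"
| "pcat (Pth xs) (Pth ys) = Pth (xs @ ys)"

text \<open>Product of two paths in kQ (None means the product is 0).\<close>
definition pmul :: "path \<Rightarrow> path \<Rightarrow> path option" where
  "pmul p q = (if psrc p = ptgt q then Some (pcat p q) else None)"

definition kQ :: "(path \<Rightarrow> 'k::field) set" where
  "kQ = {f. finite {p. f p \<noteq> 0} \<and> (\<forall>p. f p \<noteq> 0 \<longrightarrow> valid_path p)}"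

definition kzero :: "path \<Rightarrow> 'k::field" where "kzero = (\<lambda>_. 0)"
definition kadd :: "(path \<Rightarrow> 'k::field) \<Rightarrow> (path \<Rightarrow> 'k) \<Rightarrow> path \<Rightarrow> 'k" where
  "kadd f g = (\<lambda>p. f p + g p)"
definition ksmul :: "'k::field \<Rightarrow> (path \<Rightarrow> 'k) \<Rightarrow> path \<Rightarrow> 'k" where
  "ksmul c f = (\<lambda>p. c * f p)"
definition kmul :: "(path \<Rightarrow> 'k::field) \<Rightarrow> (path \<Rightarrow> 'k) \<Rightarrow> path \<Rightarrow> 'k" where
  "kmul f g = (\<lambda>r. \<Sum>(p, q) \<in> {(p, q). f p \<noteq> 0 \<and> g q \<noteq> 0 \<and> pmul p q = Some r}. f p * g q)"

definition bp :: "path \<Rightarrow> path \<Rightarrow> 'k::field" where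
  "bp p = (\<lambda>q. if q = p then 1 else 0)"

inductive_set gen_ideal :: "(path \<Rightarrow> 'k::field) set \<Rightarrow> (path \<Rightarrow> 'k) set" for G where
  gen: "g \<in> G \<Longrightarrow> g \<in> gen_ideal G"
| zero: "kzero \<in> gen_ideal G"
| add: "x \<in> gen_ideal G \<Longrightarrow> y \<in> gen_ideal G \<Longrightarrow> kadd x y \<in> gen_ideal G"
| smul: "x \<in> gen_ideal G \<Longrightarrow> ksmul c x \<in> gen_ideal G"
| lmul: "x \<in> gen_ideal G \<Longrightarrow> a \<in> kQ \<Longrightarrow> kmul a x \<in> gen_ideal G"
| rmul: "x \<in> gen_ideal G \<Longrightarrow> a \<in> kQ \<Longrightarrow> kmul x a \<in> gen_ideal G"

text \<open>alpha v gamma for v in k[beta] (polynomials in beta).\<close>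
definition alpha_v_gamma :: "'k::field poly \<Rightarrow> path \<Rightarrow> 'k" where
  "alpha_v_gamma v = (\<lambda>p. \<Sum>i\<le>degree v. coeff v i * bp (Pth (Al # replicate i Be @ [Ga])) p)"

definition Iq :: "nat \<Rightarrow> nat \<Rightarrow> nat \<Rightarrow> 'k::field poly set \<Rightarrow> (path \<Rightarrow> 'k) set" where
  "Iq n n' n'' V = gen_ideal
     ({bp (Pth (Al # replicate n' Be)), bp (Pth (replicate n Be)),
       bp (Pth (replicate n'' Be @ [Ga]))} \<union> alpha_v_gamma ` V)"

definition coset :: "(path \<Rightarrow> 'k::field) set \<Rightarrow> (path \<Rightarrow> 'k) \<Rightarrow> (path \<Rightarrow> 'k) set" where
  "coset I x = {y \<in> kQ. (\<lambda>p. y p - x p) \<in> I}"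

definition Lam :: "(path \<Rightarrow> 'k::field) set \<Rightarrow> (path \<Rightarrow> 'k) set set" where
  "Lam I = coset I ` kQ"

definition rep :: "(path \<Rightarrow> 'k::field) set \<Rightarrow> path \<Rightarrow> 'k" where
  "rep A = (SOME x. x \<in> A)"

definition qzero :: "(path \<Rightarrow> 'k::field) set \<Rightarrow> (path \<Rightarrow> 'k) set" where
  "qzero I = coset I kzero"
definition qadd :: "(path \<Rightarrow> 'k::field) set \<Rightarrow> (path \<Rightarrow> 'k) set \<Rightarrow> (path \<Rightarrow> 'k) set \<Rightarrow> (path \<Rightarrow> 'k) set" where
  "qadd I A B = coset I (kadd (rep A) (rep B))"
definition qsmul :: "(path \<Rightarrow> 'k::field) set \<Rightarrow> 'k \<Rightarrow> (path \<Rightarrow> 'k) set \<Rightarrow> (path \<Rightarrow> 'k) set" where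
  "qsmul I c A = coset I (ksmul c (rep A))"
definition qmul :: "(path \<Rightarrow> 'k::field) set \<Rightarrow> (path \<Rightarrow> 'k) set \<Rightarrow> (path \<Rightarrow> 'k) set \<Rightarrow> (path \<Rightarrow> 'k) set" where
  "qmul I A B = coset I (kmul (rep A) (rep B))"

section \<open>Derivations, inner derivations, and dim HH^1 = dim Der/Inn\<close>

definition is_derivation :: "(path \<Rightarrow> 'k::field) set \<Rightarrow> ((path \<Rightarrow> 'k) set \<Rightarrow> (path \<Rightarrow> 'k) set) \<Rightarrow> bool" where
  "is_derivation I D =
    ((\<forall>A\<in>Lam I. D A \<in> Lam I)
     \<and> (\<forall>A\<in>Lam I. \<forall>B\<in>Lam I. D (qadd I A B) = qadd I (D A) (D B))
     \<and> (\<forall>c. \<forall>A\<in>Lam I. D (qsmul I c A) = qsmul I c (D A))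
     \<and> (\<forall>A\<in>Lam I. \<forall>B\<in>Lam I. D (qmul I A B) = qadd I (qmul I (D A) B) (qmul I A (D B))))"

definition inner_der :: "(path \<Rightarrow> 'k::field) set \<Rightarrow> (path \<Rightarrow> 'k) set \<Rightarrow> (path \<Rightarrow> 'k) set \<Rightarrow> (path \<Rightarrow> 'k) set" where
  "inner_der I X = (\<lambda>A. qadd I (qmul I X A) (qsmul I (-1) (qmul I A X)))"

text \<open>Maps are identified when they agree on Lambda.\<close>
definition is_inner :: "(path \<Rightarrow> 'k::field) set \<Rightarrow> ((path \<Rightarrow> 'k) set \<Rightarrow> (path \<Rightarrow> 'k) set) \<Rightarrow> bool" where
  "is_inner I D = (\<exists>X\<in>Lam I. \<forall>A\<in>Lam I. D A = inner_der I X A)"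

fun qcomb :: "(path \<Rightarrow> 'k::field) set \<Rightarrow> ('k \<times> ((path \<Rightarrow> 'k) set \<Rightarrow> (path \<Rightarrow> 'k) set)) list
      \<Rightarrow> (path \<Rightarrow> 'k) set \<Rightarrow> (path \<Rightarrow> 'k) set" where
  "qcomb I [] A = qzero I"
| "qcomb I ((c, D) # cDs) A = qadd I (qsmul I c (D A)) (qcomb I cDs A)"

definition indep_mod_inner :: "(path \<Rightarrow> 'k::field) set \<Rightarrow> ((path \<Rightarrow> 'k) set \<Rightarrow> (path \<Rightarrow> 'k) set) list \<Rightarrow> bool" where
  "indep_mod_inner I Ds =
    ((\<forall>D\<in>set Ds. is_derivation I D)
     \<and> (\<forall>cs. length cs = length Ds \<longrightarrow> is_inner I (qcomb I (zip cs Ds)) \<longrightarrow> (\<forall>c\<in>set cs. c = 0)))"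

definition HH1_finite_dim :: "(path \<Rightarrow> 'k::field) set \<Rightarrow> bool" where
  "HH1_finite_dim I = bdd_above {length Ds | Ds. indep_mod_inner I Ds}"

definition HH1_dim :: "(path \<Rightarrow> 'k::field) set \<Rightarrow> nat" where
  "HH1_dim I = Sup {length Ds | Ds. indep_mod_inner I Ds}"

end

theory Submission
  imports Defs "HOL-Library.Function_Algebras"
begin

text \<open>Since \<open>V = (\<beta>\<^sup>t)\<close> with \<open>t = m - d\<close>, the ideal \<open>I\<close> is spanned by paths, so \<open>\<Lambda>\<close> has the basis
  of paths \<open>e\<^sub>1, e\<^sub>3, \<alpha>\<^sup>a\<beta>\<^sup>k\<gamma>\<^sup>g\<close> not in \<open>I\<close>, and we compute in coordinates.
  Every derivation becomes inner after subtracting an inner derivation fixing the idempotents and a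
  correction matching \<open>D(\<alpha>)\<close> and \<open>D(\<gamma>)\<close>, except for \<open>n - 1 + (m - 1) + c\<close> obstructions: the
  coefficients of \<open>\<beta>\<^sup>k\<close> (\<open>1 \<le> k < n\<close>) in \<open>D(\<beta>)\<close>, the sums of the coefficients of \<open>\<alpha>\<beta>\<^sup>k\<close> in
  \<open>D(\<alpha>)\<close> and of \<open>\<beta>\<^sup>k\<gamma>\<close> in \<open>D(\<gamma>)\<close> (\<open>1 \<le> k < m\<close>), and the coefficient \<open>b\<close> of \<open>e\<^sub>2\<close> in \<open>D(\<beta>)\<close>.
  Leibniz applied to \<open>\<beta>\<^sup>n = \<alpha>\<beta>\<^sup>n\<^sup>' = \<beta>\<^sup>n\<^sup>'\<^sup>'\<gamma> = 0\<close> gives \<open>n b = n' b = n'' b = 0\<close>, so \<open>b\<close> only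
  survives when \<open>char k\<close> divides \<open>\<delta>\<close>; conversely, explicit "weighted shift" derivations realise every
  obstruction, the one for \<open>b\<close> (\<open>\<beta> \<mapsto> e\<^sub>2\<close>) existing because \<open>\<delta>\<close> divides all the truncation
  degrees \<open>n, n', n'', t\<close>.\<close>

section \<open>Paths of \<open>Q\<close>\<close>

text \<open>\<open>abg a k g\<close> is the path \<open>\<alpha>\<^sup>a \<beta>\<^sup>k \<gamma>\<^sup>g\<close>, reading the booleans \<open>a, g\<close> as exponents \<open>0, 1\<close>;
  in particular \<open>abg False 0 False = e\<^sub>2\<close>.\<close>
definition abg :: "bool \<Rightarrow> nat \<Rightarrow> bool \<Rightarrow> path" where
  "abg a k g = (if \<not> a \<and> k = 0 \<and> \<not> g then Triv 2
     else Pth ((if a then [Al] else []) @ replicate k Be @ (if g then [Ga] else [])))"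

fun has_alpha :: "path \<Rightarrow> bool" where
  "has_alpha (Triv v) = False" | "has_alpha (Pth xs) = (Al \<in> set xs)"
fun has_gamma :: "path \<Rightarrow> bool" where
  "has_gamma (Triv v) = False" | "has_gamma (Pth xs) = (Ga \<in> set xs)"
fun beta_deg :: "path \<Rightarrow> nat" where
  "beta_deg (Triv v) = 0" | "beta_deg (Pth xs) = count_list xs Be"

lemma count_list_replicate_self: "count_list (replicate k x) x = k"
  by (induction k) auto

lemma has_alpha_abg [simp]: "has_alpha (abg a k g) = a"
  by (auto simp: abg_def)

lemma has_gamma_abg [simp]: "has_gamma (abg a k g) = g"
  by (auto simp: abg_def)

lemma beta_deg_abg [simp]: "beta_deg (abg a k g) = k"
  by (auto simp: abg_def count_list_replicate_self)

lemma abg_eq_iff [simp]: "abg a k g = abg a' k' g' \<longleftrightarrow> a = a' \<and> k = k' \<and> g = g'"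
proof
  assume "abg a k g = abg a' k' g'"
  then have "has_alpha (abg a k g) = has_alpha (abg a' k' g')" "beta_deg (abg a k g) = beta_deg (abg a' k' g')"
    "has_gamma (abg a k g) = has_gamma (abg a' k' g')"
    by simp_all
  then show "a = a' \<and> k = k' \<and> g = g'" by simp
qed simp

lemma abg_neq_Triv [simp]:
  "abg a k g \<noteq> Triv 1" "abg a k g \<noteq> Triv 3" "Triv 1 \<noteq> abg a k g" "Triv 3 \<noteq> abg a k g"
  "abg a k g \<noteq> Triv (Suc 0)" "Triv (Suc 0) \<noteq> abg a k g"
  by (auto simp: abg_def)

lemma abg_e2: "abg False 0 False = Triv 2"
  by (simp add: abg_def)

lemma psrc_abg [simp]: "psrc (abg a k g) = (if g then 3 else 2)"
  and ptgt_abg [simp]: "ptgt (abg a k g) = (if a then 1 else 2)"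
  by (cases k; auto simp: abg_def)+

lemma pcat_abg: "\<not> g \<Longrightarrow> \<not> a' \<Longrightarrow> pcat (abg a k g) (abg a' k' g') = abg a (k + k') g'"
  by (auto simp: abg_def replicate_add)

lemma pmul_abg_abg [simp]:
  "pmul (abg a k g) (abg a' k' g') = (if \<not> g \<and> \<not> a' then Some (abg a (k + k') g') else None)"
  by (auto simp: pmul_def pcat_abg)

lemma pmul_Triv_left: "pmul (Triv i) q = (if ptgt q = i then Some q else None)"
  by (simp add: pmul_def)

lemma pmul_Triv_right: "pmul p (Triv i) = (if psrc p = i then Some p else None)"
  by (cases p) (auto simp: pmul_def)

lemma pmul_Triv_abg [simp]:
  "pmul (Triv 1) (abg a k g) = (if a then Some (abg a k g) else None)"
  "pmul (Triv (Suc 0)) (abg a k g) = (if a then Some (abg a k g) else None)"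
  "pmul (Triv 3) (abg a k g) = None"
  by (auto simp: pmul_Triv_left)

lemma pmul_abg_Triv [simp]:
  "pmul (abg a k g) (Triv 1) = None" "pmul (abg a k g) (Triv (Suc 0)) = None"
  "pmul (abg a k g) (Triv 3) = (if g then Some (abg a k g) else None)"
  by (auto simp: pmul_Triv_right)

lemma pmul_Triv_Triv [simp]: "pmul (Triv i) (Triv j) = (if i = j then Some (Triv i) else None)"
  by (simp add: pmul_def)

definition composable :: "arrow list \<Rightarrow> bool" where
  "composable xs \<longleftrightarrow> (\<forall>i. Suc i < length xs \<longrightarrow> asrc (xs ! i) = atgt (xs ! Suc i))"

lemma composable_Nil [simp]: "composable []"
  by (simp add: composable_def)

lemma composable_Cons:
  "composable (x # xs) \<longleftrightarrow> composable xs \<and> (xs \<noteq> [] \<longrightarrow> asrc x = atgt (hd xs))"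
  by (cases xs) (auto simp: composable_def nth_Cons split: nat.splits)

lemma composable_replicate_Be:
  "composable (replicate k Be @ ys) \<longleftrightarrow> composable ys \<and> (0 < k \<and> ys \<noteq> [] \<longrightarrow> hd ys \<noteq> Al)"
proof (induction k)
  case (Suc k)
  then show ?case
    by (cases k) (auto simp: composable_Cons, (cases "hd ys"; simp)+)
qed simp

lemma composable_abg_word:
  "composable ((if a then [Al] else []) @ replicate k Be @ (if g then [Ga] else []))"
proof -
  have "composable (replicate k Be @ (if g then [Ga] else []))"
    by (subst composable_replicate_Be) (auto simp: composable_Cons)
  then show ?thesis by (cases a; cases k; cases g) (simp_all add: composable_Cons)
qed

lemma composable_shape:
  assumes "composable xs"
  obtains a k g where "xs = (if a then [Al] else []) @ replicate k Be @ (if g then [Ga] else [])"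
  using assms
proof (induction xs arbitrary: thesis)
  case Nil
  then show ?case by (metis append_Nil replicate_0)
next
  case (Cons x xs)
  from Cons.prems(2) have c: "composable xs" and h: "xs \<noteq> [] \<longrightarrow> asrc x = atgt (hd xs)"
    by (auto simp: composable_Cons)
  obtain a k g where xs: "xs = (if a then [Al] else []) @ replicate k Be @ (if g then [Ga] else [])"
    using Cons.IH[OF _ c] by blast
  show ?case
  proof (cases "xs = []")
    case True
    then show ?thesis
      using Cons.prems(1)[of True 0 False] Cons.prems(1)[of False 1 False] Cons.prems(1)[of False 0 True]
      by (cases x) auto
  next
    case False
    with h have src: "asrc x = atgt (hd xs)" by simp
    have "\<not> a" using src xs by (cases x; cases a) auto
    then show ?thesis
      using Cons.prems(1)[of True k g] Cons.prems(1)[of False "Suc k" g] src xs False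
      by (cases x; cases k; cases g) auto
  qed
qed

lemma valid_path_abg [simp]: "valid_path (abg a k g)"
  using composable_abg_word[of a k g] by (auto simp: abg_def valid_path_def composable_def)

lemma valid_path_Triv [simp]: "valid_path (Triv 1)" "valid_path (Triv (Suc 0))" "valid_path (Triv 3)"
  by (simp_all add: valid_path_def)

lemma valid_path_iff: "valid_path p \<longleftrightarrow> p = Triv 1 \<or> p = Triv 3 \<or> (\<exists>a k g. p = abg a k g)"
proof
  assume v: "valid_path p"
  show "p = Triv 1 \<or> p = Triv 3 \<or> (\<exists>a k g. p = abg a k g)"
  proof (cases p)
    case (Triv i)
    then show ?thesis using v by (auto simp: valid_path_def abg_def intro: exI[of _ False] exI[of _ 0])
  next
    case (Pth xs)
    with v have ne: "xs \<noteq> []" and c: "composable xs" by (auto simp: valid_path_def composable_def)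
    obtain a k g where "xs = (if a then [Al] else []) @ replicate k Be @ (if g then [Ga] else [])"
      using c by (rule composable_shape)
    then have "p = abg a k g" using Pth ne by (auto simp: abg_def)
    then show ?thesis by blast
  qed
next
  assume "p = Triv 1 \<or> p = Triv 3 \<or> (\<exists>a k g. p = abg a k g)"
  then show "valid_path p" by auto
qed

lemma Pth_eq_abg:
  "Pth (Al # replicate k Be) = abg True k False"
  "Pth (replicate k Be @ [Ga]) = abg False k True"
  "Pth (Al # replicate k Be @ [Ga]) = abg True k True"
  "0 < k \<Longrightarrow> Pth (replicate k Be) = abg False k False"
  by (auto simp: abg_def)

lemma pmul_valid: "valid_path p \<Longrightarrow> valid_path q \<Longrightarrow> pmul p q = Some r \<Longrightarrow> valid_path r"
  unfolding valid_path_iff[of p] valid_path_iff[of q] by (elim disjE exE) (auto split: if_splits)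

lemma pmul_Some_pcat: "pmul p q = Some r \<Longrightarrow> r = pcat p q"
  by (auto simp: pmul_def split: if_splits)

section \<open>The path algebra \<open>kQ\<close>\<close>

lemma bp_in_kQ: "valid_path p \<Longrightarrow> bp p \<in> kQ"
  by (auto simp: kQ_def bp_def)

lemma kzero_in_kQ [simp]: "kzero \<in> kQ" "(\<lambda>_. 0) \<in> kQ"
  by (simp_all add: kQ_def kzero_def)

lemma kadd_in_kQ: "f \<in> kQ \<Longrightarrow> g \<in> kQ \<Longrightarrow> kadd f g \<in> kQ"
proof -
  assume f: "f \<in> kQ" and g: "g \<in> kQ"
  have "{p. f p + g p \<noteq> 0} \<subseteq> {p. f p \<noteq> 0} \<union> {p. g p \<noteq> 0}" by auto
  then show ?thesis using f g unfolding kQ_def kadd_def by (auto intro: finite_subset)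
qed

lemma kdiff_in_kQ: "f \<in> kQ \<Longrightarrow> g \<in> kQ \<Longrightarrow> (\<lambda>p. f p - g p) \<in> kQ"
proof -
  assume f: "f \<in> kQ" and g: "g \<in> kQ"
  have "{p. f p - g p \<noteq> 0} \<subseteq> {p. f p \<noteq> 0} \<union> {p. g p \<noteq> 0}" by auto
  moreover have "\<forall>p. f p - g p \<noteq> 0 \<longrightarrow> valid_path p"
    using f g by (metis (mono_tags, lifting) kQ_def mem_Collect_eq right_minus_eq)
  ultimately show ?thesis using f g unfolding kQ_def by (auto intro: finite_subset)
qed

lemma ksmul_in_kQ: "f \<in> kQ \<Longrightarrow> ksmul c f \<in> kQ"
proof -
  assume f: "f \<in> kQ"
  have "{p. c * f p \<noteq> 0} \<subseteq> {p. f p \<noteq> 0}" by auto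
  then show ?thesis using f unfolding kQ_def ksmul_def by (auto intro: finite_subset)
qed

lemma kmul_nonzeroE:
  assumes "kmul f g r \<noteq> 0"
  obtains p q where "f p \<noteq> 0" "g q \<noteq> 0" "pmul p q = Some r"
proof (rule ccontr)
  assume "\<not> thesis"
  then have "{(p, q). f p \<noteq> 0 \<and> g q \<noteq> 0 \<and> pmul p q = Some r} = {}"
    using that by auto
  with assms show False by (simp add: kmul_def)
qed

lemma kmul_in_kQ: "f \<in> kQ \<Longrightarrow> g \<in> kQ \<Longrightarrow> kmul f g \<in> kQ"
proof -
  assume f: "f \<in> kQ" and g: "g \<in> kQ"
  have "{r. kmul f g r \<noteq> 0} \<subseteq> (\<lambda>(p, q). pcat p q) ` ({p. f p \<noteq> 0} \<times> {q. g q \<noteq> 0})"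
    by (auto elim!: kmul_nonzeroE dest!: pmul_Some_pcat)
  moreover have "finite ((\<lambda>(p, q). pcat p q) ` ({p. f p \<noteq> 0} \<times> {q. g q \<noteq> 0}))"
    using f g by (auto simp: kQ_def)
  ultimately have "finite {r. kmul f g r \<noteq> 0}" by (rule finite_subset)
  moreover have "\<forall>r. kmul f g r \<noteq> 0 \<longrightarrow> valid_path r"
    using f g by (auto simp: kQ_def elim!: kmul_nonzeroE intro: pmul_valid)
  ultimately show ?thesis by (simp add: kQ_def)
qed

lemma kmul_bp_bp_apply: "kmul (bp p) (bp q) r = (if pmul p q = Some r then 1 else (0::'a::field))"
proof -
  have "{(p', q'). bp p p' \<noteq> (0::'a) \<and> bp q q' \<noteq> (0::'a) \<and> pmul p' q' = Some r}
      = (if pmul p q = Some r then {(p, q)} else {})"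
    by (auto simp: bp_def)
  then show ?thesis by (simp add: kmul_def bp_def)
qed

lemma kmul_bp_bp: "kmul (bp p) (bp q) = (case pmul p q of None \<Rightarrow> kzero | Some r \<Rightarrow> bp r)"
  by (rule ext) (unfold kmul_bp_bp_apply, auto simp: bp_def kzero_def split: option.splits)

section \<open>Linear dependence\<close>

lemma nontrivial_relation_lift:
  fixes v :: "nat \<Rightarrow> nat \<Rightarrow> 'k::field"
  assumes J: "finite J" "k \<in> J" and vk: "v k N \<noteq> 0"
    and c': "\<exists>j\<in>J - {k}. c' j \<noteq> 0" "\<And>i. (\<Sum>j\<in>J - {k}. c' j * (v j i - v j N / v k N * v k i)) = 0"
  shows "\<exists>c. (\<exists>j\<in>J. c j \<noteq> 0) \<and> (\<forall>i. (\<Sum>j\<in>J. c j * v j i) = 0)"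
proof (intro exI conjI allI)
  define S where "S = (\<Sum>j\<in>J - {k}. c' j * v j N)"
  define c where "c = c'(k := - S / v k N)"
  show "\<exists>j\<in>J. c j \<noteq> 0" using c'(1) by (auto simp: c_def)
  fix i
  have "0 = (\<Sum>j\<in>J - {k}. c' j * v j i) - (\<Sum>j\<in>J - {k}. c' j * v j N / v k N * v k i)"
    using c'(2)[of i] by (simp add: algebra_simps sum_subtractf)
  also have "(\<Sum>j\<in>J - {k}. c' j * v j N / v k N * v k i) = S / v k N * v k i"
    by (simp add: S_def sum_distrib_right sum_divide_distrib)
  finally have "(\<Sum>j\<in>J - {k}. c' j * v j i) = S / v k N * v k i" by simp
  moreover have "(\<Sum>j\<in>J. c j * v j i) = c k * v k i + (\<Sum>j\<in>J - {k}. c' j * v j i)"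
    using J by (simp add: sum.remove c_def)
  ultimately show "(\<Sum>j\<in>J. c j * v j i) = 0" by (simp add: c_def)
qed

lemma exists_nontrivial_relation:
  fixes v :: "nat \<Rightarrow> nat \<Rightarrow> 'k::field"
  assumes "finite J" "N < card J" "\<And>j i. j \<in> J \<Longrightarrow> N \<le> i \<Longrightarrow> v j i = 0"
  shows "\<exists>c. (\<exists>j\<in>J. c j \<noteq> 0) \<and> (\<forall>i. (\<Sum>j\<in>J. c j * v j i) = 0)"
  using assms
proof (induction N arbitrary: J v)
  case 0
  then obtain j where "j \<in> J" by fastforce
  with 0 show ?case by (intro exI[of _ "\<lambda>_. 1"]) auto
next
  case (Suc N)
  show ?case
  proof (cases "\<forall>j\<in>J. v j N = 0")
    case True
    then have "v j i = 0" if "j \<in> J" "N \<le> i" for j i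
      using that Suc.prems(3) by (cases "i = N") auto
    then show ?thesis using Suc.IH[of J v] Suc.prems by auto
  next
    case False
    then obtain k where k: "k \<in> J" "v k N \<noteq> 0" by blast
    have "\<exists>c'. (\<exists>j\<in>J - {k}. c' j \<noteq> 0) \<and> (\<forall>i. (\<Sum>j\<in>J - {k}. c' j * (v j i - v j N / v k N * v k i)) = 0)"
    proof (rule Suc.IH)
      show "finite (J - {k})" "N < card (J - {k})" using Suc.prems k by auto
      show "v j i - v j N / v k N * v k i = 0" if "j \<in> J - {k}" "N \<le> i" for j i
        using that k Suc.prems(3) by (cases "i = N") auto
    qed
    then show ?thesis using nontrivial_relation_lift[where v = v and N = N, OF Suc.prems(1) k] by blast
  qed
qed

section \<open>The monomial ideal \<open>I\<close>\<close>

text \<open>The hypotheses of the theorem, with \<open>t = m - d\<close> in place of \<open>d\<close>, so that \<open>V = (\<beta>\<^sup>t)\<close>.\<close>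
locale monomial_Lambda =
  fixes n n' n'' t :: nat
  assumes two_le_n: "2 \<le> n"
    and n'_pos: "1 \<le> n'" and n'_le_n: "n' \<le> n"
    and n''_pos: "1 \<le> n''" and n''_le_n: "n'' \<le> n"
    and gcd_dvd_t: "gcd n (gcd n' n'') dvd t"
begin

definition m :: nat where "m = min n' n''"

definition std :: "bool \<Rightarrow> nat \<Rightarrow> bool \<Rightarrow> bool" where
  "std a k g \<longleftrightarrow> k < n \<and> (a \<longrightarrow> k < n') \<and> (g \<longrightarrow> k < n'') \<and> (a \<and> g \<longrightarrow> k < t)"

text \<open>The paths outside the monomial ideal \<open>I\<close>; their cosets form a basis of \<open>\<Lambda>\<close>.\<close>
definition Std :: "path set" where
  "Std = {Triv 1, Triv 3} \<union> {abg a k g | a k g. std a k g}"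

lemma abg_in_Std [simp]: "abg a k g \<in> Std \<longleftrightarrow> std a k g"
  by (auto simp: Std_def)

lemma Triv_in_Std [simp]: "Triv 1 \<in> Std" "Triv (Suc 0) \<in> Std" "Triv 3 \<in> Std"
  by (auto simp: Std_def)

lemma Std_cases [consumes 1, case_names e1 e3 abg]:
  assumes "p \<in> Std" "p = Triv 1 \<Longrightarrow> Q" "p = Triv 3 \<Longrightarrow> Q"
    "\<And>a k g. p = abg a k g \<Longrightarrow> std a k g \<Longrightarrow> Q"
  shows Q
  using assms by (auto simp: Std_def)

lemma finite_Std [simp]: "finite Std"
proof -
  have "Std \<subseteq> {Triv 1, Triv 3} \<union> (\<lambda>(a, k, g). abg a k g) ` (UNIV \<times> {..<n} \<times> UNIV)"
    by (auto simp: Std_def std_def image_iff)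
  then show ?thesis by (rule finite_subset) simp
qed

lemma Std_valid: "p \<in> Std \<Longrightarrow> valid_path p"
  by (auto simp: Std_def valid_path_iff)

lemma pmul_in_Std_factors:
  assumes "valid_path p" "valid_path q" "pmul p q = Some r" "r \<in> Std"
  shows "p \<in> Std" "q \<in> Std"
  using assms unfolding valid_path_iff[of p] valid_path_iff[of q]
  by (auto simp: std_def split: if_splits)

definition Vt :: "'k::field poly set" where
  "Vt = {v. [:0, 1:] ^ t dvd v}"

definition I :: "(path \<Rightarrow> 'k::field) set" where
  "I = Iq n n' n'' Vt"

definition gens :: "(path \<Rightarrow> 'k::field) set" where
  "gens = {bp (abg True n' False), bp (abg False n False), bp (abg False n'' True)} \<union> alpha_v_gamma ` Vt"

lemma I_eq_gen_ideal: "I = gen_ideal gens"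
  using two_le_n by (simp add: I_def Iq_def gens_def Pth_eq_abg)

lemma coeff_Vt: "v \<in> Vt \<Longrightarrow> i < t \<Longrightarrow> coeff v i = 0"
proof -
  assume "v \<in> Vt" "i < t"
  then obtain q where "v = monom 1 t * q" by (auto simp: Vt_def monom_altdef)
  with \<open>i < t\<close> show ?thesis by (simp add: coeff_monom_mult)
qed

lemma alpha_v_gamma_abg: "alpha_v_gamma v (abg True i True) = coeff v i"
proof -
  have "alpha_v_gamma v (abg True i True) = (\<Sum>j\<le>degree v. if j = i then coeff v j else 0)"
    unfolding alpha_v_gamma_def Pth_eq_abg by (intro sum.cong) (auto simp: bp_def)
  also have "\<dots> = coeff v i" by (auto simp: coeff_eq_0)
  finally show ?thesis .
qed

lemma alpha_v_gamma_other: "(\<forall>i. p \<noteq> abg True i True) \<Longrightarrow> alpha_v_gamma v p = 0"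
  unfolding alpha_v_gamma_def Pth_eq_abg by (intro sum.neutral) (auto simp: bp_def)

lemma alpha_v_gamma_nonzeroE:
  assumes "alpha_v_gamma v p \<noteq> 0"
  obtains i where "p = abg True i True" "coeff v i \<noteq> 0"
  using assms alpha_v_gamma_other alpha_v_gamma_abg by metis

lemma alpha_v_gamma_in_kQ: "alpha_v_gamma v \<in> kQ"
proof -
  have "{p. alpha_v_gamma v p \<noteq> 0} \<subseteq> (\<lambda>i. abg True i True) ` {..degree v}"
    by (auto elim!: alpha_v_gamma_nonzeroE intro: le_degree)
  then have "finite {p. alpha_v_gamma v p \<noteq> 0}" by (rule finite_subset) simp
  moreover have "\<forall>p. alpha_v_gamma v p \<noteq> 0 \<longrightarrow> valid_path p"
    by (auto elim!: alpha_v_gamma_nonzeroE)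
  ultimately show ?thesis by (simp add: kQ_def)
qed

lemma gens_vanish_on_Std: "g \<in> gens \<Longrightarrow> g \<in> kQ \<and> (\<forall>p\<in>Std. g p = 0)"
proof -
  assume g: "g \<in> gens"
  have "alpha_v_gamma v p = 0" if "v \<in> Vt" "p \<in> Std" for v p
  proof (rule ccontr)
    assume "alpha_v_gamma v p \<noteq> 0"
    then obtain i where "p = abg True i True" "coeff v i \<noteq> 0"
      by (rule alpha_v_gamma_nonzeroE)
    then show False using that coeff_Vt[of v i] by (auto simp: std_def)
  qed
  then have "\<forall>p\<in>Std. g p = 0"
    using g by (auto simp: gens_def bp_def std_def)
  moreover have "g \<in> kQ"
    using g by (auto simp: gens_def intro: bp_in_kQ alpha_v_gamma_in_kQ)
  ultimately show ?thesis by simp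
qed

lemma gen_ideal_vanishes_on_Std: "x \<in> gen_ideal gens \<Longrightarrow> x \<in> kQ \<and> (\<forall>p\<in>Std. x p = 0)"
proof (induction rule: gen_ideal.induct)
  case (gen g)
  then show ?case by (rule gens_vanish_on_Std)
next
  case zero
  then show ?case by (simp add: kzero_def)
next
  case (add x y)
  then show ?case using kadd_in_kQ[of x y] by (simp add: kadd_def)
next
  case (smul x c)
  then show ?case using ksmul_in_kQ[of x c] by (simp add: ksmul_def)
next
  case (lmul x a)
  have "kmul a x r = 0" if r: "r \<in> Std" for r
  proof (rule ccontr)
    assume "kmul a x r \<noteq> 0"
    then obtain p q where pq: "a p \<noteq> 0" "x q \<noteq> 0" "pmul p q = Some r"
      by (rule kmul_nonzeroE)
    then have "valid_path p" "valid_path q" using lmul by (auto simp: kQ_def)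
    then show False using pq lmul.IH r pmul_in_Std_factors(2) by blast
  qed
  then show ?case using lmul by (simp add: kmul_in_kQ)
next
  case (rmul x a)
  have "kmul x a r = 0" if r: "r \<in> Std" for r
  proof (rule ccontr)
    assume "kmul x a r \<noteq> 0"
    then obtain p q where pq: "x p \<noteq> 0" "a q \<noteq> 0" "pmul p q = Some r"
      by (rule kmul_nonzeroE)
    then have "valid_path p" "valid_path q" using rmul by (auto simp: kQ_def)
    then show False using pq rmul.IH r pmul_in_Std_factors(1) by blast
  qed
  then show ?case using rmul by (simp add: kmul_in_kQ)
qed

text \<open>Every path outside \<open>Std\<close> is divisible by one of the monomial generators.\<close>
lemma bp_in_gen_ideal:
  assumes "valid_path p" "p \<notin> Std"
  shows "(bp p :: path \<Rightarrow> 'k::field) \<in> gen_ideal gens"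
proof -
  obtain a k g where p: "p = abg a k g" and ns: "\<not> std a k g"
    using assms unfolding valid_path_iff by auto
  have gen: "x \<in> gens \<Longrightarrow> x \<in> gen_ideal gens" for x
    by (rule gen_ideal.gen)
  consider "n \<le> k" | "a" "n' \<le> k" | "g" "n'' \<le> k" | "a" "g" "t \<le> k"
    using ns by (auto simp: std_def)
  then show ?thesis
  proof cases
    case 1
    have e: "bp p = kmul (kmul (bp (abg a (k - n) False)) (bp (abg False n False))) (bp (abg False 0 g))"
      using 1 p by (simp add: kmul_bp_bp)
    show ?thesis unfolding e
      by (intro gen_ideal.rmul gen_ideal.lmul gen) (auto simp: gens_def bp_in_kQ)
  next
    case 2
    have e: "bp p = kmul (bp (abg True n' False)) (bp (abg False (k - n') g))"
      using 2 p by (simp add: kmul_bp_bp)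
    show ?thesis unfolding e
      by (intro gen_ideal.rmul gen) (auto simp: gens_def bp_in_kQ)
  next
    case 3
    have e: "bp p = kmul (bp (abg a (k - n'') False)) (bp (abg False n'' True))"
      using 3 p by (simp add: kmul_bp_bp)
    show ?thesis unfolding e
      by (intro gen_ideal.lmul gen) (auto simp: gens_def bp_in_kQ)
  next
    case 4
    have "(monom 1 k :: 'k poly) = [:0, 1:] ^ t * monom 1 (k - t)"
      using 4 by (simp add: monom_altdef flip: power_add)
    then have "(monom 1 k :: 'k poly) \<in> Vt" by (auto simp: Vt_def)
    moreover have "alpha_v_gamma (monom 1 k) = bp p"
    proof
      fix q
      show "alpha_v_gamma (monom 1 k) q = bp p q"
        using 4 p by (cases "\<exists>i. q = abg True i True")
          (auto simp: alpha_v_gamma_abg alpha_v_gamma_other bp_def coeff_monom)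
    qed
    ultimately show ?thesis by (metis gen gens_def image_eqI UnI2)
  qed
qed

lemma sum_bp_in_gen_ideal:
  "finite S \<Longrightarrow> (\<And>p. p \<in> S \<Longrightarrow> (bp p :: path \<Rightarrow> 'k::field) \<in> gen_ideal gens)
    \<Longrightarrow> (\<lambda>r. \<Sum>p\<in>S. (c :: path \<Rightarrow> 'k) p * bp p r) \<in> gen_ideal gens"
proof (induction S rule: finite_induct)
  case empty
  then show ?case using gen_ideal.zero by (simp add: kzero_def)
next
  case (insert x S)
  then have "kadd (ksmul (c x) (bp x)) (\<lambda>r. \<Sum>p\<in>S. c p * bp p r) \<in> gen_ideal gens"
    by (intro gen_ideal.add gen_ideal.smul) auto
  then show ?case using insert by (simp add: kadd_def ksmul_def)
qed

lemma kQ_eq_sum_bp: "f \<in> kQ \<Longrightarrow> f = (\<lambda>r. \<Sum>p\<in>{p. f p \<noteq> 0}. f p * bp p r)"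
proof
  fix r assume "f \<in> kQ"
  then have fin: "finite {p. f p \<noteq> 0}" by (simp add: kQ_def)
  show "f r = (\<Sum>p\<in>{p. f p \<noteq> 0}. f p * bp p r)"
  proof (cases "f r = 0")
    case True
    have "(\<Sum>p\<in>{p. f p \<noteq> 0}. f p * bp p r) = 0"
      using True by (intro sum.neutral) (auto simp: bp_def)
    then show ?thesis using True by simp
  next
    case False
    then have "(\<Sum>p\<in>{p. f p \<noteq> 0}. f p * bp p r) = f r * bp r r"
      using fin by (subst sum.remove[of _ r]) (auto simp: bp_def intro!: sum.neutral split: if_splits)
    then show ?thesis by (simp add: bp_def)
  qed
qed

theorem I_eq: "(I :: (path \<Rightarrow> 'k::field) set) = {f \<in> kQ. \<forall>p\<in>Std. f p = 0}"
proof
  show "(I :: (path \<Rightarrow> 'k) set) \<subseteq> {f \<in> kQ. \<forall>p\<in>Std. f p = 0}"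
    using gen_ideal_vanishes_on_Std by (auto simp: I_eq_gen_ideal)
next
  show "{f \<in> kQ. \<forall>p\<in>Std. f p = 0} \<subseteq> (I :: (path \<Rightarrow> 'k) set)"
  proof
    fix f :: "path \<Rightarrow> 'k" assume f: "f \<in> {f \<in> kQ. \<forall>p\<in>Std. f p = 0}"
    have "f = (\<lambda>r. \<Sum>p\<in>{p. f p \<noteq> 0}. f p * bp p r)"
      using f by (intro kQ_eq_sum_bp) simp
    also have "\<dots> \<in> gen_ideal gens"
      using f by (intro sum_bp_in_gen_ideal) (auto simp: kQ_def intro: bp_in_gen_ideal)
    finally show "f \<in> I" by (simp add: I_eq_gen_ideal)
  qed
qed

section \<open>\<open>\<Lambda>\<close> in coordinates\<close>

text \<open>An element of \<open>\<Lambda> = kQ/I\<close> is represented by its coordinates in the basis \<open>Std\<close>,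
  i.e. by a function vanishing outside \<open>Std\<close>; the product of \<open>\<Lambda>\<close> becomes the truncated
  product \<open>\<star>\<close> with structure constants \<open>mcoef\<close>.\<close>

definition on_Std :: "(path \<Rightarrow> 'k::field) \<Rightarrow> bool" where
  "on_Std f \<longleftrightarrow> (\<forall>p. p \<notin> Std \<longrightarrow> f p = 0)"

definition restr :: "(path \<Rightarrow> 'k::field) \<Rightarrow> path \<Rightarrow> 'k" where
  "restr f = (\<lambda>p. if p \<in> Std then f p else 0)"

definition coords :: "(path \<Rightarrow> 'k::field) set \<Rightarrow> path \<Rightarrow> 'k" where
  "coords A = restr (rep A)"

definition cls :: "(path \<Rightarrow> 'k::field) \<Rightarrow> (path \<Rightarrow> 'k) set" where
  "cls f = coset I f"

definition scale :: "'k::field \<Rightarrow> (path \<Rightarrow> 'k) \<Rightarrow> path \<Rightarrow> 'k" where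
  "scale c f = (\<lambda>p. c * f p)"

definition mcoef :: "path \<Rightarrow> path \<Rightarrow> path \<Rightarrow> 'k::field" where
  "mcoef p q r = (if pmul p q = Some r \<and> r \<in> Std then 1 else 0)"

definition tmul :: "(path \<Rightarrow> 'k::field) \<Rightarrow> (path \<Rightarrow> 'k) \<Rightarrow> path \<Rightarrow> 'k" (infixl "\<star>" 70) where
  "f \<star> g = (\<lambda>r. \<Sum>p\<in>Std. \<Sum>q\<in>Std. f p * g q * mcoef p q r)"

definition ad :: "(path \<Rightarrow> 'k::field) \<Rightarrow> (path \<Rightarrow> 'k) \<Rightarrow> path \<Rightarrow> 'k" where
  "ad x f = x \<star> f - f \<star> x"

lemma coset_eq: "f \<in> kQ \<Longrightarrow> coset I f = {y \<in> kQ. \<forall>p\<in>Std. y p = f p}"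
  unfolding coset_def I_eq by (auto simp: kdiff_in_kQ)

lemma on_Std_in_kQ: "on_Std h \<Longrightarrow> h \<in> kQ"
proof -
  assume h: "on_Std h"
  then have "{p. h p \<noteq> 0} \<subseteq> Std" by (auto simp: on_Std_def)
  then have "finite {p. h p \<noteq> 0}" by (rule finite_subset) simp
  moreover have "\<forall>p. h p \<noteq> 0 \<longrightarrow> valid_path p" using h Std_valid by (auto simp: on_Std_def)
  ultimately show ?thesis by (simp add: kQ_def)
qed

lemma on_Std_restr [simp]: "on_Std (restr f)"
  by (simp add: on_Std_def restr_def)

lemma restr_on_Std: "on_Std f \<Longrightarrow> restr f = f"
  by (auto simp: on_Std_def restr_def)

lemma coset_restr: "f \<in> kQ \<Longrightarrow> coset I f = cls (restr f)"
  unfolding cls_def using on_Std_in_kQ[OF on_Std_restr[of f]] by (simp add: coset_eq restr_def)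

lemma LamE:
  assumes "A \<in> Lam I"
  obtains f where "f \<in> kQ" "A = coset I f"
  using assms by (auto simp: Lam_def)

lemma coset_self: "f \<in> kQ \<Longrightarrow> f \<in> coset I f"
  by (simp add: coset_eq)

lemma rep_in: "A \<in> Lam I \<Longrightarrow> rep A \<in> A"
proof -
  assume "A \<in> Lam I"
  then obtain f where "f \<in> kQ" "A = coset I f" by (rule LamE)
  then have "f \<in> A" by (simp add: coset_self)
  then show ?thesis unfolding rep_def by (rule someI[of "\<lambda>x. x \<in> A"])
qed

lemma rep_in_kQ: "A \<in> Lam I \<Longrightarrow> rep A \<in> kQ"
proof -
  assume A: "A \<in> Lam I"
  then obtain f where "A = coset I f" by (rule LamE)
  with rep_in[OF A] show ?thesis by (simp add: coset_def)
qed

lemma coords_coset: "f \<in> kQ \<Longrightarrow> coords (coset I f) = restr f"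
proof -
  assume f: "f \<in> kQ"
  then have "rep (coset I f) \<in> coset I f" by (intro rep_in) (auto simp: Lam_def)
  then show ?thesis using f by (auto simp: coords_def restr_def coset_eq)
qed

lemma coords_cls [simp]: "on_Std h \<Longrightarrow> coords (cls h) = h"
  by (simp add: cls_def coords_coset on_Std_in_kQ restr_on_Std)

lemma cls_in_Lam: "on_Std h \<Longrightarrow> cls h \<in> Lam I"
  by (auto simp: cls_def Lam_def on_Std_in_kQ)

lemma on_Std_coords [simp]: "on_Std (coords A)"
  by (simp add: coords_def)

lemma cls_coords: "A \<in> Lam I \<Longrightarrow> cls (coords A) = A"
  by (elim LamE) (simp add: coords_coset coset_restr)

lemma Lam_eqI: "A \<in> Lam I \<Longrightarrow> B \<in> Lam I \<Longrightarrow> coords A = coords B \<Longrightarrow> A = B"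
  by (metis cls_coords)

lemma on_Std_add [simp]: "on_Std f \<Longrightarrow> on_Std g \<Longrightarrow> on_Std (f + g)"
  and on_Std_diff [simp]: "on_Std f \<Longrightarrow> on_Std g \<Longrightarrow> on_Std (f - g)"
  and on_Std_scale [simp]: "on_Std f \<Longrightarrow> on_Std (scale c f)"
  and on_Std_zero [simp]: "on_Std 0"
  by (simp_all add: on_Std_def scale_def)

lemma mcoef_notin_Std: "r \<notin> Std \<Longrightarrow> mcoef p q r = 0"
  by (simp add: mcoef_def)

lemma on_Std_tmul [simp]: "on_Std (f \<star> g)"
  by (simp add: on_Std_def tmul_def mcoef_notin_Std)

lemma on_Std_bp [simp]: "p \<in> Std \<Longrightarrow> on_Std (bp p)"
  by (auto simp: on_Std_def bp_def)

lemma on_Std_ad [simp]: "on_Std (ad x f)"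
  by (simp add: ad_def)

lemma qzero_eq: "qzero I = (cls 0 :: (path \<Rightarrow> 'k::field) set)"
proof -
  have "restr kzero = (0 :: path \<Rightarrow> 'k)" by (auto simp: restr_def kzero_def)
  then show ?thesis unfolding qzero_def by (simp add: coset_restr)
qed

lemma qadd_eq: "A \<in> Lam I \<Longrightarrow> B \<in> Lam I \<Longrightarrow> qadd I A B = cls (coords A + coords B)"
proof -
  assume A: "A \<in> Lam I" and B: "B \<in> Lam I"
  have "kadd (rep A) (rep B) \<in> kQ" using A B by (simp add: kadd_in_kQ rep_in_kQ)
  moreover have "restr (kadd (rep A) (rep B)) = coords A + coords B"
    by (auto simp: restr_def kadd_def coords_def)
  ultimately show ?thesis unfolding qadd_def by (simp add: coset_restr)
qed

lemma qsmul_eq: "A \<in> Lam I \<Longrightarrow> qsmul I c A = cls (scale c (coords A))"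
proof -
  assume A: "A \<in> Lam I"
  have "ksmul c (rep A) \<in> kQ" using A by (simp add: ksmul_in_kQ rep_in_kQ)
  moreover have "restr (ksmul c (rep A)) = scale c (coords A)"
    by (auto simp: restr_def ksmul_def coords_def scale_def)
  ultimately show ?thesis unfolding qsmul_def by (simp add: coset_restr)
qed

lemma restr_kmul: "f \<in> kQ \<Longrightarrow> g \<in> kQ \<Longrightarrow> restr (kmul f g) = restr f \<star> restr g"
proof (rule ext)
  fix r
  assume f: "f \<in> kQ" and g: "g \<in> kQ"
  show "restr (kmul f g) r = (restr f \<star> restr g) r"
  proof (cases "r \<in> Std")
    case False
    then show ?thesis by (simp add: restr_def tmul_def mcoef_notin_Std)
  next
    case True
    let ?S = "{(p, q). f p \<noteq> 0 \<and> g q \<noteq> 0 \<and> pmul p q = Some r}"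
    have "?S \<subseteq> Std \<times> Std"
      using f g True by (auto simp: kQ_def intro: pmul_in_Std_factors)
    have "restr (kmul f g) r = kmul f g r" using True by (simp add: restr_def)
    also have "\<dots> = (\<Sum>(p, q)\<in>Std \<times> Std. restr f p * restr g q * mcoef p q r)"
      unfolding kmul_def using \<open>?S \<subseteq> Std \<times> Std\<close>
      by (intro sum.mono_neutral_cong_left) (use True in \<open>auto simp: restr_def mcoef_def split: if_splits\<close>)
    also have "\<dots> = (restr f \<star> restr g) r"
      by (simp add: tmul_def sum.cartesian_product)
    finally show ?thesis .
  qed
qed

lemma qmul_eq: "A \<in> Lam I \<Longrightarrow> B \<in> Lam I \<Longrightarrow> qmul I A B = cls (coords A \<star> coords B)"
proof -
  assume A: "A \<in> Lam I" and B: "B \<in> Lam I"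
  have "kmul (rep A) (rep B) \<in> kQ" using A B by (simp add: kmul_in_kQ rep_in_kQ)
  moreover have "restr (kmul (rep A) (rep B)) = coords A \<star> coords B"
    using A B by (simp add: restr_kmul rep_in_kQ coords_def)
  ultimately show ?thesis unfolding qmul_def by (simp add: coset_restr)
qed

lemma qzero_in_Lam: "qzero I \<in> Lam I"
  by (simp add: qzero_eq cls_in_Lam)

lemma qadd_in_Lam: "A \<in> Lam I \<Longrightarrow> B \<in> Lam I \<Longrightarrow> qadd I A B \<in> Lam I"
  and qsmul_in_Lam: "A \<in> Lam I \<Longrightarrow> qsmul I c A \<in> Lam I"
  and qmul_in_Lam: "A \<in> Lam I \<Longrightarrow> B \<in> Lam I \<Longrightarrow> qmul I A B \<in> Lam I"
  by (simp_all add: qadd_eq qsmul_eq qmul_eq cls_in_Lam)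

lemma coords_qzero: "coords (qzero I) = (0 :: path \<Rightarrow> 'k::field)"
  and coords_qadd: "A \<in> Lam I \<Longrightarrow> B \<in> Lam I \<Longrightarrow> coords (qadd I A B) = coords A + coords B"
  and coords_qsmul: "A \<in> Lam I \<Longrightarrow> coords (qsmul I c A) = scale c (coords A)"
  and coords_qmul: "A \<in> Lam I \<Longrightarrow> B \<in> Lam I \<Longrightarrow> coords (qmul I A B) = coords A \<star> coords B"
  by (simp_all add: qzero_eq qadd_eq qsmul_eq qmul_eq)

lemma inner_der_in_Lam: "X \<in> Lam I \<Longrightarrow> A \<in> Lam I \<Longrightarrow> inner_der I X A \<in> Lam I"
  by (simp add: inner_der_def qadd_in_Lam qsmul_in_Lam qmul_in_Lam)

lemma coords_inner_der:
  "X \<in> Lam I \<Longrightarrow> A \<in> Lam I \<Longrightarrow> coords (inner_der I X A) = ad (coords X) (coords A)"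
  by (simp add: inner_der_def coords_qadd qsmul_in_Lam qmul_in_Lam coords_qsmul coords_qmul
      ad_def scale_def fun_eq_iff)

lemma tmul_add_left: "(f + g) \<star> h = f \<star> h + g \<star> h"
  and tmul_add_right: "f \<star> (g + h) = f \<star> g + f \<star> h"
  and tmul_diff_left: "(f - g) \<star> h = f \<star> h - g \<star> h"
  and tmul_diff_right: "f \<star> (g - h) = f \<star> g - f \<star> h"
  and tmul_scale_left: "scale c f \<star> g = scale c (f \<star> g)"
  and tmul_scale_right: "f \<star> scale c g = scale c (f \<star> g)"
  by (simp_all add: tmul_def scale_def fun_eq_iff algebra_simps sum.distrib sum_subtractf
      sum_distrib_left)

lemma tmul_zero_left [simp]: "0 \<star> g = 0"
  and tmul_zero_right [simp]: "f \<star> 0 = 0"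
  by (simp_all add: tmul_def fun_eq_iff)

lemma tmul_bp_left: "u \<in> Std \<Longrightarrow> (bp u \<star> g) r = (\<Sum>q\<in>Std. g q * mcoef u q r)"
proof -
  assume u: "u \<in> Std"
  have "(bp u \<star> g) r = (\<Sum>p\<in>Std. if p = u then (\<Sum>q\<in>Std. g q * mcoef u q r) else 0)"
    unfolding tmul_def by (intro sum.cong) (auto simp: bp_def)
  then show ?thesis using u by simp
qed

lemma tmul_bp_right: "v \<in> Std \<Longrightarrow> (f \<star> bp v) r = (\<Sum>p\<in>Std. f p * mcoef p v r)"
proof -
  assume v: "v \<in> Std"
  have "(f \<star> bp v) r = (\<Sum>p\<in>Std. \<Sum>q\<in>Std. if q = v then f p * mcoef p v r else 0)"
    unfolding tmul_def by (intro sum.cong) (auto simp: bp_def)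
  then show ?thesis using v by simp
qed

lemma tmul_bp_bp: "u \<in> Std \<Longrightarrow> v \<in> Std \<Longrightarrow> bp u \<star> bp v = mcoef u v"
proof (rule ext)
  fix r assume u: "u \<in> Std" and v: "v \<in> Std"
  have "(bp u \<star> bp v) r = (\<Sum>q\<in>Std. bp v q * mcoef u q r)"
    using u by (simp add: tmul_bp_left)
  also have "\<dots> = (\<Sum>q\<in>Std. if q = v then mcoef u v r else 0)"
    by (intro sum.cong) (auto simp: bp_def)
  finally have "(bp u \<star> bp v) r = (\<Sum>q\<in>Std. if q = v then mcoef u v r else 0)" .
  then show "(bp u \<star> bp v) r = mcoef u v r" using v by simp
qed

lemma mcoef_eq_bp: "pmul u v = Some w \<Longrightarrow> w \<in> Std \<Longrightarrow> mcoef u v = bp w"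
  and mcoef_eq_0: "pmul u v = Some w \<Longrightarrow> w \<notin> Std \<Longrightarrow> mcoef u v = 0"
  and mcoef_None: "pmul u v = None \<Longrightarrow> mcoef u v = 0"
  by (auto simp: mcoef_def bp_def fun_eq_iff)

lemma tmul_expand_left: "(f \<star> g) r = (\<Sum>p\<in>Std. f p * (bp p \<star> g) r)"
proof -
  have "(f \<star> g) r = (\<Sum>p\<in>Std. \<Sum>q\<in>Std. f p * g q * mcoef p q r)" by (simp add: tmul_def)
  also have "\<dots> = (\<Sum>p\<in>Std. f p * (bp p \<star> g) r)"
    by (intro sum.cong refl) (simp add: tmul_bp_left sum_distrib_left mult_ac)
  finally show ?thesis .
qed

lemma tmul_expand_right: "(f \<star> g) r = (\<Sum>q\<in>Std. g q * (f \<star> bp q) r)"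
proof -
  have "(f \<star> g) r = (\<Sum>q\<in>Std. \<Sum>p\<in>Std. f p * g q * mcoef p q r)"
    unfolding tmul_def by (rule sum.swap)
  also have "\<dots> = (\<Sum>q\<in>Std. g q * (f \<star> bp q) r)"
    by (intro sum.cong refl) (simp add: tmul_bp_right sum_distrib_left mult_ac)
  finally show ?thesis .
qed

lemma on_Std_expand: "on_Std f \<Longrightarrow> f = (\<lambda>r. \<Sum>p\<in>Std. f p * bp p r)"
proof (rule ext)
  fix r assume f: "on_Std f"
  have "(\<Sum>p\<in>Std. f p * bp p r) = (\<Sum>p\<in>Std. if p = r then f r else 0)"
    by (intro sum.cong) (auto simp: bp_def)
  also have "\<dots> = f r" using f by (auto simp: on_Std_def)
  finally show "f r = (\<Sum>p\<in>Std. f p * bp p r)" by simp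
qed

lemma sum_mcoef_left:
  "(\<Sum>u\<in>Std. mcoef p q u * X u) = (case pmul p q of None \<Rightarrow> 0 | Some u \<Rightarrow> if u \<in> Std then X u else 0)"
proof (cases "pmul p q")
  case (Some w)
  have "(\<Sum>u\<in>Std. mcoef p q u * X u) = (\<Sum>u\<in>Std. if w = u then X u else 0)"
    using Some by (intro sum.cong) (auto simp: mcoef_def)
  then show ?thesis using Some by simp
qed (simp add: mcoef_def)

lemma std_prefix: "std a (k + k') g \<Longrightarrow> std a k False"
  and std_suffix: "std a (k + k') g \<Longrightarrow> std False k' g"
  and std_middle: "std a (k + (k' + k'')) g \<Longrightarrow> std a (k + k') False"
  by (auto simp: std_def)

text \<open>Truncation to \<open>Std\<close> preserves associativity because \<open>Std\<close> is closed under taking factors.\<close>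
lemma mcoef_assoc:
  assumes "p \<in> Std" "q \<in> Std" "v \<in> Std"
  shows "(\<Sum>w\<in>Std. mcoef p q w * mcoef w v r) = (\<Sum>u\<in>Std. mcoef q v u * (mcoef p u r :: 'k::field))"
proof -
  have "(case pmul p q of None \<Rightarrow> 0 | Some w \<Rightarrow> if w \<in> Std then mcoef w v r else 0) =
    (case pmul q v of None \<Rightarrow> 0 | Some u \<Rightarrow> if u \<in> Std then mcoef p u r else (0::'k))"
    using assms by (elim Std_cases) (auto simp: mcoef_def add.assoc dest: std_prefix std_suffix std_middle)
  then show ?thesis by (simp only: sum_mcoef_left)
qed

lemma sum_rotate3:
  "(\<Sum>a\<in>A. \<Sum>b\<in>B. \<Sum>c\<in>C. X a b c) = (\<Sum>b\<in>B. \<Sum>c\<in>C. \<Sum>a\<in>A. (X a b c :: 'a::comm_monoid_add))"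
  by (subst sum.swap) (rule sum.cong[OF refl], rule sum.swap)

lemma tmul_assoc: "(f \<star> g) \<star> h = f \<star> (g \<star> h)"
proof
  fix r
  let ?X = "\<lambda>p q v. f p * g q * h v"
  have "((f \<star> g) \<star> h) r = (\<Sum>w\<in>Std. \<Sum>v\<in>Std. \<Sum>p\<in>Std. \<Sum>q\<in>Std. ?X p q v * (mcoef p q w * mcoef w v r))"
    unfolding tmul_def by (simp add: sum_distrib_left sum_distrib_right mult_ac)
  also have "\<dots> = (\<Sum>w\<in>Std. \<Sum>p\<in>Std. \<Sum>q\<in>Std. \<Sum>v\<in>Std. ?X p q v * (mcoef p q w * mcoef w v r))"
    by (rule sum.cong[OF refl], rule sum_rotate3)
  also have "\<dots> = (\<Sum>p\<in>Std. \<Sum>q\<in>Std. \<Sum>w\<in>Std. \<Sum>v\<in>Std. ?X p q v * (mcoef p q w * mcoef w v r))"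
    by (rule sum_rotate3)
  also have "\<dots> = (\<Sum>p\<in>Std. \<Sum>q\<in>Std. \<Sum>v\<in>Std. ?X p q v * (\<Sum>w\<in>Std. mcoef p q w * mcoef w v r))"
    by (simp add: sum_distrib_left) (rule sum.cong[OF refl], rule sum.cong[OF refl], rule sum.swap)
  also have "\<dots> = (\<Sum>p\<in>Std. \<Sum>q\<in>Std. \<Sum>v\<in>Std. ?X p q v * (\<Sum>u\<in>Std. mcoef q v u * mcoef p u r))"
    by (intro sum.cong refl) (simp add: mcoef_assoc)
  also have "\<dots> = (\<Sum>p\<in>Std. \<Sum>u\<in>Std. \<Sum>q\<in>Std. \<Sum>v\<in>Std. ?X p q v * (mcoef q v u * mcoef p u r))"
    by (simp add: sum_distrib_left) (rule sum.cong[OF refl], rule sum_rotate3[symmetric])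
  also have "\<dots> = (f \<star> (g \<star> h)) r"
    unfolding tmul_def by (simp add: sum_distrib_left sum_distrib_right mult_ac)
  finally show "((f \<star> g) \<star> h) r = (f \<star> (g \<star> h)) r" .
qed

lemma ad_tmul: "ad x (f \<star> g) = ad x f \<star> g + f \<star> ad x g"
  by (simp add: ad_def tmul_diff_left tmul_diff_right tmul_assoc)

lemma ad_add_left: "ad (x + y) f = ad x f + ad y f"
  by (simp add: ad_def tmul_add_left tmul_add_right)

lemma ad_expand: "ad x f = (\<lambda>r. \<Sum>p\<in>Std. f p * ad x (bp p) r)"
  unfolding ad_def fun_eq_iff
  by (simp add: tmul_expand_right[of x f] tmul_expand_left[of f x] right_diff_distrib sum_subtractf)

section \<open>Derivations\<close>

lemma std_generators [simp]:
  "std False 0 False" "std False 1 False" "std False (Suc 0) False" "std True 0 False" "std False 0 True"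
  using two_le_n n'_pos n''_pos by (simp_all add: std_def)

lemma Triv2_in_Std [simp]: "Triv 2 \<in> Std"
  using abg_in_Std[of False 0 False] by (simp add: abg_e2)

lemma Triv_in_StdI: "i \<in> {1, 2, 3} \<Longrightarrow> Triv i \<in> Std"
  by auto

lemma Std_psrc: "r \<in> Std \<Longrightarrow> psrc r \<in> {1, 2, 3}"
  and Std_ptgt: "r \<in> Std \<Longrightarrow> ptgt r \<in> {1, 2, 3}"
  by (erule Std_cases; simp)+

lemma std_drop_alpha: "std True k g \<Longrightarrow> std False k g"
  and std_Suc: "std a (Suc k) g \<Longrightarrow> std a k g"
  and std_add: "std a (k + s) g \<Longrightarrow> std a k g"
  by (auto simp: std_def)

definition is_der :: "((path \<Rightarrow> 'k::field) \<Rightarrow> path \<Rightarrow> 'k) \<Rightarrow> bool" where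
  "is_der D \<longleftrightarrow> (\<forall>f. on_Std f \<longrightarrow> on_Std (D f))
     \<and> (\<forall>f g. on_Std f \<longrightarrow> on_Std g \<longrightarrow> D (f + g) = D f + D g)
     \<and> (\<forall>c f. on_Std f \<longrightarrow> D (scale c f) = scale c (D f))
     \<and> (\<forall>f g. on_Std f \<longrightarrow> on_Std g \<longrightarrow> D (f \<star> g) = D f \<star> g + f \<star> D g)"

lemma is_der_on_Std: "is_der D \<Longrightarrow> on_Std f \<Longrightarrow> on_Std (D f)"
  and is_der_add: "is_der D \<Longrightarrow> on_Std f \<Longrightarrow> on_Std g \<Longrightarrow> D (f + g) = D f + D g"
  and is_der_scale: "is_der D \<Longrightarrow> on_Std f \<Longrightarrow> D (scale c f) = scale c (D f)"
  and is_der_tmul: "is_der D \<Longrightarrow> on_Std f \<Longrightarrow> on_Std g \<Longrightarrow> D (f \<star> g) = D f \<star> g + f \<star> D g"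
  by (simp_all add: is_der_def)

lemma is_der_zero: "is_der D \<Longrightarrow> D 0 = 0"
  using is_der_scale[OF _ on_Std_zero, of D 0] by (simp add: scale_def zero_fun_def)

lemma on_Std_sum_bp: "S \<subseteq> Std \<Longrightarrow> on_Std (\<lambda>r. \<Sum>p\<in>S. c p * bp p r)"
  by (auto simp: on_Std_def bp_def intro!: sum.neutral)

lemma is_der_sum_bp:
  assumes D: "is_der D" and S: "S \<subseteq> Std"
  shows "D (\<lambda>r. \<Sum>p\<in>S. c p * bp p r) = (\<lambda>r. \<Sum>p\<in>S. c p * D (bp p) r)"
proof -
  have "finite S" using S by (rule finite_subset) simp
  then show ?thesis using S
  proof (induction S rule: finite_induct)
    case empty
    then show ?case using is_der_zero[OF D] by (simp add: zero_fun_def)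
  next
    case (insert x S)
    have split: "(\<lambda>r. \<Sum>p\<in>insert x S. c p * h p r) = scale (c x) (h x) + (\<lambda>r. \<Sum>p\<in>S. c p * h p r)" for h
      using insert.hyps by (simp add: scale_def fun_eq_iff)
    have x: "x \<in> Std" and S: "S \<subseteq> Std" using insert.prems by auto
    have "D (scale (c x) (bp x) + (\<lambda>r. \<Sum>p\<in>S. c p * bp p r))
        = D (scale (c x) (bp x)) + D (\<lambda>r. \<Sum>p\<in>S. c p * bp p r)"
      using x S by (intro is_der_add[OF D]) (simp_all add: on_Std_sum_bp)
    then show ?case
      using insert.IH[OF S] x by (simp only: split is_der_scale[OF D on_Std_bp])
  qed
qed

lemma is_der_expand: "is_der D \<Longrightarrow> on_Std f \<Longrightarrow> D f = (\<lambda>r. \<Sum>p\<in>Std. f p * D (bp p) r)"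
  by (subst on_Std_expand[of f]) (simp_all add: is_der_sum_bp)

lemma is_der_eq_ad_basis:
  assumes "is_der D" "\<And>p. p \<in> Std \<Longrightarrow> D (bp p) = ad x (bp p)" "on_Std f"
  shows "D f = ad x f"
proof -
  have "D f = (\<lambda>r. \<Sum>p\<in>Std. f p * D (bp p) r)" using assms by (simp only: is_der_expand)
  also have "\<dots> = ad x f" using assms(2) by (simp add: ad_expand[of x f])
  finally show ?thesis .
qed

lemma bp_eq_tmul: "u \<in> Std \<Longrightarrow> v \<in> Std \<Longrightarrow> pmul u v = Some w \<Longrightarrow> w \<in> Std \<Longrightarrow> bp w = bp u \<star> bp v"
  by (simp add: tmul_bp_bp mcoef_eq_bp)

lemma is_der_eq_ad_pmul:
  assumes D: "is_der D" and uv: "u \<in> Std" "v \<in> Std" "pmul u v = Some w" "w \<in> Std"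
    and "D (bp u) = ad x (bp u)" "D (bp v) = ad x (bp v)"
  shows "D (bp w) = ad x (bp w)"
proof -
  have "D (bp w) = D (bp u) \<star> bp v + bp u \<star> D (bp v)"
    using uv by (simp add: bp_eq_tmul[OF uv] is_der_tmul[OF D])
  then show ?thesis using assms by (simp add: bp_eq_tmul[OF uv] ad_tmul)
qed

lemma is_der_eq_ad_of_generators:
  assumes D: "is_der D"
    and e: "\<And>i. i \<in> {1, 2, 3} \<Longrightarrow> D (bp (Triv i)) = ad x (bp (Triv i))"
    and \<alpha>: "D (bp (abg True 0 False)) = ad x (bp (abg True 0 False))"
    and \<beta>: "D (bp (abg False 1 False)) = ad x (bp (abg False 1 False))"
    and \<gamma>: "D (bp (abg False 0 True)) = ad x (bp (abg False 0 True))"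
    and f: "on_Std f"
  shows "D f = ad x f"
proof (rule is_der_eq_ad_basis[OF D _ f])
  have no_alpha: "D (bp (abg False k g)) = ad x (bp (abg False k g))" if "std False k g" for k g
    using that
  proof (induction k)
    case 0
    then show ?case using e[of 2] \<gamma> by (cases g) (simp_all add: abg_e2)
  next
    case (Suc k)
    have k: "std False k g" using std_Suc[OF Suc.prems] .
    have "pmul (abg False 1 False) (abg False k g) = Some (abg False (Suc k) g)" by simp
    from is_der_eq_ad_pmul[OF D _ _ this _ \<beta> Suc.IH[OF k]] show ?case
      using k Suc.prems by simp
  qed
  have with_alpha: "D (bp (abg True k g)) = ad x (bp (abg True k g))" if "std True k g" for k g
  proof -
    have k: "std False k g" using std_drop_alpha[OF that] .
    have "pmul (abg True 0 False) (abg False k g) = Some (abg True k g)" by simp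
    from is_der_eq_ad_pmul[OF D _ _ this _ \<alpha> no_alpha[OF k]] show ?thesis
      using k that by simp
  qed
  fix p assume "p \<in> Std"
  then show "D (bp p) = ad x (bp p)"
  proof (cases rule: Std_cases)
    case (abg a k g)
    then show ?thesis using no_alpha with_alpha by (cases a) simp_all
  qed (use e[of 1] e[of 3] in simp_all)
qed

lemma sum_mcoef_right_unique:
  "p0 \<in> Std \<Longrightarrow> (\<And>p. p \<in> Std \<Longrightarrow> (pmul p v = Some r \<and> r \<in> Std) = (p = p0)) \<Longrightarrow>
   (\<Sum>p\<in>Std. f p * mcoef p v r) = (f p0 :: 'k::field)"
proof -
  assume p0: "p0 \<in> Std" and h: "\<And>p. p \<in> Std \<Longrightarrow> (pmul p v = Some r \<and> r \<in> Std) = (p = p0)"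
  have "(\<Sum>p\<in>Std. f p * mcoef p v r) = (\<Sum>p\<in>Std. if p = p0 then f p else 0)"
    by (intro sum.cong refl) (simp add: mcoef_def h)
  then show ?thesis using p0 by simp
qed

lemma sum_mcoef_right_none:
  "(\<And>p. p \<in> Std \<Longrightarrow> \<not> (pmul p v = Some r \<and> r \<in> Std)) \<Longrightarrow> (\<Sum>p\<in>Std. f p * mcoef p v r) = (0 :: 'k::field)"
  by (rule sum.neutral) (auto simp: mcoef_def)

lemma sum_mcoef_left_unique:
  "q0 \<in> Std \<Longrightarrow> (\<And>q. q \<in> Std \<Longrightarrow> (pmul u q = Some r \<and> r \<in> Std) = (q = q0)) \<Longrightarrow>
   (\<Sum>q\<in>Std. f q * mcoef u q r) = (f q0 :: 'k::field)"
proof -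
  assume q0: "q0 \<in> Std" and h: "\<And>q. q \<in> Std \<Longrightarrow> (pmul u q = Some r \<and> r \<in> Std) = (q = q0)"
  have "(\<Sum>q\<in>Std. f q * mcoef u q r) = (\<Sum>q\<in>Std. if q = q0 then f q else 0)"
    by (intro sum.cong refl) (simp add: mcoef_def h)
  then show ?thesis using q0 by simp
qed

lemma sum_mcoef_left_none:
  "(\<And>q. q \<in> Std \<Longrightarrow> \<not> (pmul u q = Some r \<and> r \<in> Std)) \<Longrightarrow> (\<Sum>q\<in>Std. f q * mcoef u q r) = (0 :: 'k::field)"
  by (rule sum.neutral) (auto simp: mcoef_def)

lemma tmul_Triv_right:
  assumes i: "Triv i \<in> Std" and r: "r \<in> Std"
  shows "(f \<star> bp (Triv i)) r = (if psrc r = i then f r else 0)"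
proof (cases "psrc r = i")
  case True
  then have "(\<Sum>p\<in>Std. f p * mcoef p (Triv i) r) = f r"
    using r by (intro sum_mcoef_right_unique) (auto simp: pmul_Triv_right)
  then show ?thesis using True i by (simp add: tmul_bp_right)
next
  case False
  then have "(\<Sum>p\<in>Std. f p * mcoef p (Triv i) r) = 0"
    by (intro sum_mcoef_right_none) (auto simp: pmul_Triv_right)
  then show ?thesis using False i by (simp add: tmul_bp_right)
qed

lemma tmul_Triv_left:
  assumes i: "Triv i \<in> Std" and r: "r \<in> Std"
  shows "(bp (Triv i) \<star> f) r = (if ptgt r = i then f r else 0)"
proof (cases "ptgt r = i")
  case True
  then have "(\<Sum>q\<in>Std. f q * mcoef (Triv i) q r) = f r"
    using r by (intro sum_mcoef_left_unique) (auto simp: pmul_Triv_left)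
  then show ?thesis using True i by (simp add: tmul_bp_left)
next
  case False
  then have "(\<Sum>q\<in>Std. f q * mcoef (Triv i) q r) = 0"
    by (intro sum_mcoef_left_none) (auto simp: pmul_Triv_left)
  then show ?thesis using False i by (simp add: tmul_bp_left)
qed

lemma pmul_beta_gamma_right_eq:
  "p \<in> Std \<Longrightarrow> g = g' \<Longrightarrow> j \<le> k \<Longrightarrow> (pmul p (abg False j g') = Some (abg a k g)) = (p = abg a (k - j) False)"
  and pmul_beta_gamma_right_neq:
  "p \<in> Std \<Longrightarrow> \<not> (g = g' \<and> j \<le> k) \<Longrightarrow> pmul p (abg False j g') \<noteq> Some (abg a k g)"
  and pmul_beta_gamma_right_Triv:
  "p \<in> Std \<Longrightarrow> i = 1 \<or> i = 3 \<Longrightarrow> pmul p (abg False j g') \<noteq> Some (Triv i)"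
  and pmul_alpha_beta_left_eq:
  "q \<in> Std \<Longrightarrow> a = a' \<Longrightarrow> j \<le> k \<Longrightarrow> (pmul (abg a' j False) q = Some (abg a k g)) = (q = abg False (k - j) g)"
  and pmul_alpha_beta_left_neq:
  "q \<in> Std \<Longrightarrow> \<not> (a = a' \<and> j \<le> k) \<Longrightarrow> pmul (abg a' j False) q \<noteq> Some (abg a k g)"
  and pmul_alpha_beta_left_Triv:
  "q \<in> Std \<Longrightarrow> i = 1 \<or> i = 3 \<Longrightarrow> pmul (abg a' j False) q \<noteq> Some (Triv i)"
  and pmul_alpha_right_eq:
  "p \<in> Std \<Longrightarrow> (pmul p (abg True 0 False) = Some r) = (p = Triv 1 \<and> r = abg True 0 False)"
  and pmul_gamma_left_eq:
  "q \<in> Std \<Longrightarrow> (pmul (abg False 0 True) q = Some r) = (q = Triv 3 \<and> r = abg False 0 True)"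
  by (erule Std_cases; auto)+

lemma tmul_beta_gamma_right:
  assumes j: "std False j g'" and r: "std a k g"
  shows "(f \<star> bp (abg False j g')) (abg a k g) = (if g = g' \<and> j \<le> k then f (abg a (k - j) False) else 0)"
proof (cases "g = g' \<and> j \<le> k")
  case True
  have "std a (k - j) False" using r True by (auto simp: std_def)
  then have "(\<Sum>p\<in>Std. f p * mcoef p (abg False j g') (abg a k g)) = f (abg a (k - j) False)"
    using True r pmul_beta_gamma_right_eq by (intro sum_mcoef_right_unique) auto
  then show ?thesis using True j by (simp add: tmul_bp_right)
next
  case False
  then have "(\<Sum>p\<in>Std. f p * mcoef p (abg False j g') (abg a k g)) = 0"
    using pmul_beta_gamma_right_neq by (intro sum_mcoef_right_none) blast
  then show ?thesis using j by (subst if_not_P[OF False]) (simp add: tmul_bp_right)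
qed

lemma tmul_beta_gamma_right_Triv:
  assumes "std False j g'" "i = 1 \<or> i = 3"
  shows "(f \<star> bp (abg False j g')) (Triv i) = 0"
proof -
  have "(\<Sum>p\<in>Std. f p * mcoef p (abg False j g') (Triv i)) = 0"
    using assms(2) pmul_beta_gamma_right_Triv by (intro sum_mcoef_right_none) blast
  then show ?thesis using assms(1) by (simp add: tmul_bp_right)
qed

lemma tmul_alpha_beta_left:
  assumes j: "std a' j False" and r: "std a k g"
  shows "(bp (abg a' j False) \<star> f) (abg a k g) = (if a = a' \<and> j \<le> k then f (abg False (k - j) g) else 0)"
proof (cases "a = a' \<and> j \<le> k")
  case True
  have "std False (k - j) g" using r True by (auto simp: std_def)
  then have "(\<Sum>q\<in>Std. f q * mcoef (abg a' j False) q (abg a k g)) = f (abg False (k - j) g)"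
    using True r pmul_alpha_beta_left_eq by (intro sum_mcoef_left_unique) auto
  then show ?thesis using True j by (simp add: tmul_bp_left)
next
  case False
  then have "(\<Sum>q\<in>Std. f q * mcoef (abg a' j False) q (abg a k g)) = 0"
    using pmul_alpha_beta_left_neq by (intro sum_mcoef_left_none) blast
  then show ?thesis using j by (subst if_not_P[OF False]) (simp add: tmul_bp_left)
qed

lemma tmul_alpha_beta_left_Triv:
  assumes "std a' j False" "i = 1 \<or> i = 3"
  shows "(bp (abg a' j False) \<star> f) (Triv i) = 0"
proof -
  have "(\<Sum>q\<in>Std. f q * mcoef (abg a' j False) q (Triv i)) = 0"
    using assms(2) pmul_alpha_beta_left_Triv by (intro sum_mcoef_left_none) blast
  then show ?thesis using assms(1) by (simp add: tmul_bp_left)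
qed

lemma tmul_alpha_right:
  assumes r: "r \<in> Std"
  shows "(f \<star> bp (abg True 0 False)) r = (if r = abg True 0 False then f (Triv 1) else 0)"
proof (cases "r = abg True 0 False")
  case True
  then have "(\<Sum>p\<in>Std. f p * mcoef p (abg True 0 False) r) = f (Triv 1)"
    using r pmul_alpha_right_eq by (intro sum_mcoef_right_unique) auto
  then show ?thesis using True by (simp add: tmul_bp_right)
next
  case False
  then have "(\<Sum>p\<in>Std. f p * mcoef p (abg True 0 False) r) = 0"
    using pmul_alpha_right_eq by (intro sum_mcoef_right_none) blast
  then show ?thesis using False by (simp add: tmul_bp_right)
qed

lemma tmul_gamma_left:
  assumes r: "r \<in> Std"
  shows "(bp (abg False 0 True) \<star> f) r = (if r = abg False 0 True then f (Triv 3) else 0)"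
proof (cases "r = abg False 0 True")
  case True
  then have "(\<Sum>q\<in>Std. f q * mcoef (abg False 0 True) q r) = f (Triv 3)"
    using r pmul_gamma_left_eq by (intro sum_mcoef_left_unique) auto
  then show ?thesis using True by (simp add: tmul_bp_left)
next
  case False
  then have "(\<Sum>q\<in>Std. f q * mcoef (abg False 0 True) q r) = 0"
    using pmul_gamma_left_eq by (intro sum_mcoef_left_none) blast
  then show ?thesis using False by (simp add: tmul_bp_left)
qed

section \<open>Reducing a derivation modulo inner derivations\<close>

lemma is_der_ad: "is_der (ad x)"
  by (simp add: is_der_def ad_def tmul_add_left tmul_add_right tmul_scale_left tmul_scale_right
      ad_tmul[unfolded ad_def]) (simp add: scale_def fun_eq_iff algebra_simps)

lemma is_der_diff: "is_der D \<Longrightarrow> is_der E \<Longrightarrow> is_der (\<lambda>f. D f - E f)"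
  unfolding is_der_def
  by (simp add: tmul_diff_left tmul_diff_right) (simp add: scale_def fun_eq_iff algebra_simps)

text \<open>The coefficients of \<open>D(e\<^sub>i)\<close> at \<open>r\<close>, constrained by \<open>e\<^sub>j e\<^sub>j\<^sub>' = \<delta>\<^sub>j\<^sub>j\<^sub>' e\<^sub>j\<close>, where \<open>s\<close> and
  \<open>t'\<close> are the source and target of \<open>r\<close>.\<close>
lemma idempotent_coeff_relations:
  fixes u :: "nat \<Rightarrow> 'k::field"
  assumes A: "\<And>i. i \<in> {1,2,3} \<Longrightarrow> u i = (if s = i then u i else 0) + (if t' = i then u i else 0)"
    and B: "s \<noteq> t' \<Longrightarrow> 0 = u t' + u s"
    and i: "i \<in> {1,2,3}"
  shows "u i = (if s = i then u s else 0) - (if t' = i then u s else 0)"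
proof (cases "s = i")
  case True
  show ?thesis
  proof (cases "t' = i")
    case True
    with \<open>s = i\<close> A[OF i] have "u i = u i + u i" by simp
    then have "u i = 0" by (simp only: add_cancel_right_right)
    then show ?thesis using \<open>s = i\<close> by simp
  qed (use \<open>s = i\<close> in simp)
next
  case False
  show ?thesis
  proof (cases "t' = i")
    case True
    with False B have "0 = u i + u s" by simp
    then show ?thesis using False True by (simp add: eq_neg_iff_add_eq_0 add.commute)
  qed (use False A[OF i] in simp)
qed

lemma is_der_Triv_Triv_at:
  fixes D :: "(path \<Rightarrow> 'k::field) \<Rightarrow> path \<Rightarrow> 'k"
  assumes D: "is_der D" and r: "r \<in> Std" and j: "j \<in> {1,2,3}" and j': "j' \<in> {1,2,3}"
  shows "(if j = j' then D (bp (Triv j)) r else 0)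
    = (if psrc r = j' then D (bp (Triv j)) r else 0) + (if ptgt r = j then D (bp (Triv j')) r else 0)"
proof -
  have Tj: "Triv j \<in> Std" "Triv j' \<in> Std" using j j' by (auto intro: Triv_in_StdI)
  have "D (bp (Triv j) \<star> bp (Triv j')) = D (bp (Triv j)) \<star> bp (Triv j') + bp (Triv j) \<star> D (bp (Triv j'))"
    using Tj by (simp add: is_der_tmul[OF D])
  moreover have "bp (Triv j) \<star> bp (Triv j') = (if j = j' then bp (Triv j) else (0 :: path \<Rightarrow> 'k))"
    using Tj by (auto simp: tmul_bp_bp mcoef_eq_bp mcoef_None)
  ultimately have "D (if j = j' then bp (Triv j) else 0) r
      = (D (bp (Triv j)) \<star> bp (Triv j')) r + (bp (Triv j) \<star> D (bp (Triv j'))) r"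
    by simp
  moreover have "(if j = j' then D (bp (Triv j)) r else 0) = D (if j = j' then bp (Triv j) else 0) r"
    by (cases "j = j'") (simp_all add: is_der_zero[OF D])
  ultimately show ?thesis by (simp add: tmul_Triv_right[OF Tj(2) r] tmul_Triv_left[OF Tj(1) r])
qed

text \<open>The inner derivation that agrees with \<open>D\<close> on \<open>e\<^sub>1, e\<^sub>2, e\<^sub>3\<close>: its coefficient at a basis
  path \<open>r\<close> is that of \<open>D(e\<^sub>s\<^sub>(\<^sub>r\<^sub>))\<close>, \<open>s(r)\<close> the source of \<open>r\<close>.\<close>
definition idem_corr :: "((path \<Rightarrow> 'k::field) \<Rightarrow> path \<Rightarrow> 'k) \<Rightarrow> path \<Rightarrow> 'k" where
  "idem_corr D = (\<lambda>r. if r \<in> Std then D (bp (Triv (psrc r))) r else 0)"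

lemma on_Std_idem_corr [simp]: "on_Std (idem_corr D)"
  by (simp add: on_Std_def idem_corr_def)

lemma is_der_Triv_eq_ad:
  fixes D :: "(path \<Rightarrow> 'k::field) \<Rightarrow> path \<Rightarrow> 'k"
  assumes D: "is_der D" and i: "i \<in> {1,2,3}"
  shows "D (bp (Triv i)) = ad (idem_corr D) (bp (Triv i))"
proof (rule ext)
  fix r
  let ?u = "\<lambda>j. D (bp (Triv j)) r"
  show "D (bp (Triv i)) r = ad (idem_corr D) (bp (Triv i)) r"
  proof (cases "r \<in> Std")
    case False
    have "on_Std (D (bp (Triv i)))" using i by (intro is_der_on_Std[OF D] on_Std_bp Triv_in_StdI)
    then show ?thesis using False on_Std_ad[of "idem_corr D" "bp (Triv i)"] by (simp add: on_Std_def)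
  next
    case True
    note rel = is_der_Triv_Triv_at[OF D True]
    have s: "psrc r \<in> {1,2,3}" and t: "ptgt r \<in> {1,2,3}" using True Std_psrc Std_ptgt by auto
    have A: "?u j = (if psrc r = j then ?u j else 0) + (if ptgt r = j then ?u j else 0)"
      if "j \<in> {1,2,3}" for j
      using rel[OF that that] by simp
    have B: "0 = ?u (ptgt r) + ?u (psrc r)" if "psrc r \<noteq> ptgt r"
      using rel[OF t s] that by simp
    have "?u i = (if psrc r = i then ?u (psrc r) else 0) - (if ptgt r = i then ?u (psrc r) else 0)"
      by (rule idempotent_coeff_relations[OF A B i])
    moreover have "ad (idem_corr D) (bp (Triv i)) r
        = (if psrc r = i then ?u (psrc r) else 0) - (if ptgt r = i then ?u (psrc r) else 0)"
      using True i by (simp add: ad_def tmul_Triv_right tmul_Triv_left Triv_in_StdI idem_corr_def)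
    ultimately show ?thesis by simp
  qed
qed

lemma is_der_local:
  fixes D :: "(path \<Rightarrow> 'k::field) \<Rightarrow> path \<Rightarrow> 'k"
  assumes D: "is_der D" and e: "\<And>i. i \<in> {1,2,3} \<Longrightarrow> D (bp (Triv i)) = 0"
    and v: "v \<in> Std" and r: "D (bp v) r \<noteq> 0"
  shows "r \<in> Std" "ptgt r = ptgt v" "psrc r = psrc v"
proof -
  have "on_Std (D (bp v))" using D v by (simp add: is_der_on_Std)
  then show r_Std: "r \<in> Std" using r by (auto simp: on_Std_def)
  have tv: "ptgt v \<in> {1,2,3}" and sv: "psrc v \<in> {1,2,3}" using v Std_psrc Std_ptgt by auto
  then have Tt: "Triv (ptgt v) \<in> Std" and Ts: "Triv (psrc v) \<in> Std" by (auto intro: Triv_in_StdI)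
  have "bp (Triv (ptgt v)) \<star> bp v = (bp v :: path \<Rightarrow> 'k)"
    by (rule bp_eq_tmul[OF Tt v _ v, symmetric]) (simp add: pmul_Triv_left)
  then have "D (bp v) = D (bp (Triv (ptgt v)) \<star> bp v)" by simp
  also have "\<dots> = bp (Triv (ptgt v)) \<star> D (bp v)"
    using is_der_tmul[OF D on_Std_bp[OF Tt] on_Std_bp[OF v]] e[OF tv] by simp
  finally have "D (bp v) = bp (Triv (ptgt v)) \<star> D (bp v)" .
  then have "D (bp v) r = (if ptgt r = ptgt v then D (bp v) r else 0)"
    using tmul_Triv_left[OF Tt r_Std] by metis
  then show "ptgt r = ptgt v" using r by presburger
  have "bp v \<star> bp (Triv (psrc v)) = (bp v :: path \<Rightarrow> 'k)"
    by (rule bp_eq_tmul[OF v Ts _ v, symmetric]) (simp add: pmul_Triv_right)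
  then have "D (bp v) = D (bp v \<star> bp (Triv (psrc v)))" by simp
  also have "\<dots> = D (bp v) \<star> bp (Triv (psrc v))"
    using is_der_tmul[OF D on_Std_bp[OF v] on_Std_bp[OF Ts]] e[OF sv] by simp
  finally have "D (bp v) = D (bp v) \<star> bp (Triv (psrc v))" .
  then have "D (bp v) r = (if psrc r = psrc v then D (bp v) r else 0)"
    using tmul_Triv_right[OF Ts r_Std] by metis
  then show "psrc r = psrc v" using r by presburger
qed

lemma is_der_pmul_at:
  assumes D: "is_der D" and "u \<in> Std" "v \<in> Std" "pmul u v = Some w" "w \<in> Std"
  shows "D (bp w) r = (D (bp u) \<star> bp v) r + (bp u \<star> D (bp v)) r"
  using assms by (simp add: bp_eq_tmul is_der_tmul[OF D])

lemma is_der_pmul_notin_at: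
  fixes D :: "(path \<Rightarrow> 'k::field) \<Rightarrow> path \<Rightarrow> 'k"
  assumes D: "is_der D" and "u \<in> Std" "v \<in> Std" "pmul u v = Some w" "w \<notin> Std"
  shows "(D (bp u) \<star> bp v) r + (bp u \<star> D (bp v)) r = 0"
proof -
  have "bp u \<star> bp v = (0 :: path \<Rightarrow> 'k)" using assms by (simp add: tmul_bp_bp mcoef_eq_0)
  then have "D (bp u) \<star> bp v + bp u \<star> D (bp v) = 0"
    using assms is_der_tmul[OF D, of "bp u" "bp v"] is_der_zero[OF D] by simp
  then show ?thesis by (metis zero_fun_apply plus_fun_apply)
qed

lemma ad_beta_diag: "std False k False \<Longrightarrow> ad x (bp (abg False 1 False)) (abg False k False) = 0"
  by (simp add: ad_def tmul_beta_gamma_right tmul_alpha_beta_left)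

lemma ad_alpha_gamma_sum:
  "1 \<le> k \<Longrightarrow> std True k False \<Longrightarrow> std False k True \<Longrightarrow>
   ad x (bp (abg True 0 False)) (abg True k False) + ad x (bp (abg False 0 True)) (abg False k True) = 0"
  by (simp add: ad_def tmul_alpha_right tmul_alpha_beta_left tmul_beta_gamma_right tmul_gamma_left)

definition beta_e2_coeff :: "((path \<Rightarrow> 'k::field) \<Rightarrow> path \<Rightarrow> 'k) \<Rightarrow> 'k" where
  "beta_e2_coeff D = D (bp (abg False 1 False)) (abg False 0 False)"

lemma der_beta_power:
  assumes D: "is_der D" and k: "Suc k < n"
  shows "D (bp (abg False (Suc k) False)) (abg False k False) = of_nat (Suc k) * beta_e2_coeff D"
  using k
proof (induction k)
  case (Suc k)
  have m: "pmul (abg False 1 False) (abg False (Suc k) False) = Some (abg False (Suc (Suc k)) False)"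
    by simp
  then have "D (bp (abg False (Suc (Suc k)) False)) (abg False (Suc k) False)
      = (D (bp (abg False 1 False)) \<star> bp (abg False (Suc k) False)) (abg False (Suc k) False)
        + (bp (abg False 1 False) \<star> D (bp (abg False (Suc k) False))) (abg False (Suc k) False)"
    using Suc.prems by (intro is_der_pmul_at[OF D]) (simp_all add: std_def)
  also have "\<dots> = beta_e2_coeff D + D (bp (abg False (Suc k) False)) (abg False k False)"
    using Suc.prems by (simp add: std_def tmul_beta_gamma_right tmul_alpha_beta_left beta_e2_coeff_def)
  finally show ?case using Suc by (simp add: algebra_simps)
qed (simp add: beta_e2_coeff_def)

lemma der_alpha_beta_power:
  assumes D: "is_der D" and k: "Suc k < n'"
  shows "D (bp (abg True (Suc k) False)) (abg True k False) = of_nat (Suc k) * beta_e2_coeff D"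
proof -
  have m: "pmul (abg True 0 False) (abg False (Suc k) False) = Some (abg True (Suc k) False)" by simp
  then have "D (bp (abg True (Suc k) False)) (abg True k False)
      = (D (bp (abg True 0 False)) \<star> bp (abg False (Suc k) False)) (abg True k False)
        + (bp (abg True 0 False) \<star> D (bp (abg False (Suc k) False))) (abg True k False)"
    using k n'_le_n by (intro is_der_pmul_at[OF D]) (simp_all add: std_def)
  also have "\<dots> = D (bp (abg False (Suc k) False)) (abg False k False)"
    using k n'_le_n by (simp add: std_def tmul_beta_gamma_right tmul_alpha_beta_left)
  finally show ?thesis using der_beta_power[OF D] k n'_le_n by simp
qed

lemma der_beta_gamma_power:
  assumes D: "is_der D" and k: "Suc k < n''"
  shows "D (bp (abg False (Suc k) True)) (abg False k True) = of_nat (Suc k) * beta_e2_coeff D"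
proof -
  have m: "pmul (abg False (Suc k) False) (abg False 0 True) = Some (abg False (Suc k) True)" by simp
  then have "D (bp (abg False (Suc k) True)) (abg False k True)
      = (D (bp (abg False (Suc k) False)) \<star> bp (abg False 0 True)) (abg False k True)
        + (bp (abg False (Suc k) False) \<star> D (bp (abg False 0 True))) (abg False k True)"
    using k n''_le_n by (intro is_der_pmul_at[OF D]) (simp_all add: std_def)
  also have "\<dots> = D (bp (abg False (Suc k) False)) (abg False k False)"
    using k n''_le_n by (simp add: std_def tmul_beta_gamma_right tmul_alpha_beta_left)
  finally show ?thesis using der_beta_power[OF D] k n''_le_n by simp
qed

text \<open>From the relations \<open>\<beta>\<^sup>n = 0\<close>, \<open>\<alpha>\<beta>\<^sup>n\<^sup>' = 0\<close> and \<open>\<beta>\<^sup>n\<^sup>'\<^sup>'\<gamma> = 0\<close>, respectively.\<close>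
lemma beta_e2_coeff_n: "is_der D \<Longrightarrow> of_nat n * beta_e2_coeff D = 0"
proof -
  assume D: "is_der D"
  obtain K where K: "n = Suc (Suc K)" using two_le_n by (metis add_2_eq_Suc le_Suc_ex)
  then have KK: "Suc K < n" "\<not> Suc (Suc K) < n" by simp_all
  have m: "pmul (abg False 1 False) (abg False (Suc K) False) = Some (abg False (Suc (Suc K)) False)"
    and notin: "abg False (Suc (Suc K)) False \<notin> Std"
    using KK by (simp_all add: std_def)
  then have "0 = (D (bp (abg False 1 False)) \<star> bp (abg False (Suc K) False)) (abg False (Suc K) False)
      + (bp (abg False 1 False) \<star> D (bp (abg False (Suc K) False))) (abg False (Suc K) False)"
    using KK two_le_n by (intro is_der_pmul_notin_at[OF D _ _ m notin, symmetric]) (simp_all add: std_def)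
  also have "\<dots> = beta_e2_coeff D + of_nat (Suc K) * beta_e2_coeff D"
    using KK der_beta_power[OF D KK(1)]
    by (simp add: std_def tmul_beta_gamma_right tmul_alpha_beta_left beta_e2_coeff_def)
  finally show ?thesis using K by (simp add: algebra_simps)
qed

lemma beta_e2_coeff_n': "is_der D \<Longrightarrow> of_nat n' * beta_e2_coeff D = 0"
proof -
  assume D: "is_der D"
  obtain K where K: "n' = Suc K" using n'_pos not0_implies_Suc by fastforce
  then have KK: "K < n'" "K < n" "\<not> Suc K < n'" using n'_le_n by simp_all
  have m: "pmul (abg True K False) (abg False 1 False) = Some (abg True (Suc K) False)"
    and notin: "abg True (Suc K) False \<notin> Std"
    using KK by (simp_all add: std_def)
  then have "0 = (D (bp (abg True K False)) \<star> bp (abg False 1 False)) (abg True K False)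
      + (bp (abg True K False) \<star> D (bp (abg False 1 False))) (abg True K False)"
    using KK two_le_n by (intro is_der_pmul_notin_at[OF D _ _ m notin, symmetric]) (simp_all add: std_def)
  also have "\<dots> = of_nat K * beta_e2_coeff D + beta_e2_coeff D"
    using KK two_le_n der_alpha_beta_power[OF D]
    by (cases K) (simp_all add: std_def tmul_beta_gamma_right tmul_alpha_beta_left beta_e2_coeff_def)
  finally show ?thesis using K by (simp add: algebra_simps)
qed

lemma beta_e2_coeff_n'': "is_der D \<Longrightarrow> of_nat n'' * beta_e2_coeff D = 0"
proof -
  assume D: "is_der D"
  obtain K where K: "n'' = Suc K" using n''_pos not0_implies_Suc by fastforce
  then have KK: "K < n''" "K < n" "\<not> Suc K < n''" using n''_le_n by simp_all
  have m: "pmul (abg False 1 False) (abg False K True) = Some (abg False (Suc K) True)"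
    and notin: "abg False (Suc K) True \<notin> Std"
    using KK by (simp_all add: std_def)
  then have "0 = (D (bp (abg False 1 False)) \<star> bp (abg False K True)) (abg False K True)
      + (bp (abg False 1 False) \<star> D (bp (abg False K True))) (abg False K True)"
    using KK two_le_n by (intro is_der_pmul_notin_at[OF D _ _ m notin, symmetric]) (simp_all add: std_def)
  also have "\<dots> = beta_e2_coeff D + of_nat K * beta_e2_coeff D"
    using KK two_le_n der_beta_gamma_power[OF D]
    by (cases K) (simp_all add: std_def tmul_beta_gamma_right tmul_alpha_beta_left beta_e2_coeff_def)
  finally show ?thesis using K by (simp add: algebra_simps)
qed

lemma beta_e2_coeff_eq_0:
  fixes D :: "(path \<Rightarrow> 'k::field) \<Rightarrow> path \<Rightarrow> 'k"
  assumes D: "is_der D" and char: "of_nat (gcd n (gcd n' n'')) \<noteq> (0::'k)"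
  shows "beta_e2_coeff D = 0"
proof (rule ccontr)
  assume "beta_e2_coeff D \<noteq> 0"
  then have "of_nat n = (0::'k)" "of_nat n' = (0::'k)" "of_nat n'' = (0::'k)"
    using beta_e2_coeff_n[OF D] beta_e2_coeff_n'[OF D] beta_e2_coeff_n''[OF D] by auto
  then have "CHAR('k) dvd gcd n (gcd n' n'')" by (simp add: of_nat_eq_0_iff_char_dvd)
  with char show False by (simp add: of_nat_eq_0_iff_char_dvd)
qed

section \<open>The coordinates of \<open>HH\<^sup>1(\<Lambda>)\<close>\<close>

text \<open>Coordinates of the class of a derivation \<open>D\<close> in \<open>HH\<^sup>1(\<Lambda>)\<close>: for \<open>i < n - 1\<close> the
  coefficient of \<open>\<beta>\<^sup>i\<^sup>+\<^sup>1\<close> in \<open>D(\<beta>)\<close>; for \<open>j = i - (n - 2)\<close> in \<open>[1, m)\<close> the coefficient of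
  \<open>\<alpha>\<beta>\<^sup>j\<close> in \<open>D(\<alpha>)\<close> plus that of \<open>\<beta>\<^sup>j\<gamma>\<close> in \<open>D(\<gamma>)\<close>; and, when \<open>char k\<close> divides
  \<open>gcd(n, n', n'')\<close>, the coefficient of \<open>e\<^sub>2\<close> in \<open>D(\<beta>)\<close>.\<close>
definition hh_coord :: "((path \<Rightarrow> 'k::field) \<Rightarrow> path \<Rightarrow> 'k) \<Rightarrow> nat \<Rightarrow> 'k" where
  "hh_coord D i =
    (if i < n - 1 then D (bp (abg False 1 False)) (abg False (Suc i) False)
     else if i < n - 1 + (m - 1) then
       D (bp (abg True 0 False)) (abg True (Suc (i - (n - 1))) False)
       + D (bp (abg False 0 True)) (abg False (Suc (i - (n - 1))) True)
     else if i = n - 1 + (m - 1) \<and> of_nat (gcd n (gcd n' n'')) = (0::'k) then beta_e2_coeff D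
     else 0)"

lemma hh_coord_beta:
  assumes "1 \<le> k" "k < n"
  shows "hh_coord D (k - 1) = D (bp (abg False 1 False)) (abg False k False)"
proof -
  have i: "k - 1 < n - 1" and k: "Suc (k - 1) = k" using assms by auto
  show ?thesis unfolding hh_coord_def if_P[OF i] k ..
qed

lemma hh_coord_alpha_gamma:
  assumes "1 \<le> k" "k < m"
  shows "hh_coord D (n - 1 + (k - 1))
     = D (bp (abg True 0 False)) (abg True k False) + D (bp (abg False 0 True)) (abg False k True)"
proof -
  have i1: "\<not> n - 1 + (k - 1) < n - 1" and i2: "n - 1 + (k - 1) < n - 1 + (m - 1)"
    and k: "Suc (n - 1 + (k - 1) - (n - 1)) = k"
    using assms by auto
  show ?thesis unfolding hh_coord_def if_not_P[OF i1] if_P[OF i2] k ..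
qed

lemma hh_coord_e2:
  assumes "of_nat (gcd n (gcd n' n'')) = (0::'k::field)"
  shows "hh_coord (D :: (path \<Rightarrow> 'k) \<Rightarrow> _) (n - 1 + (m - 1)) = beta_e2_coeff D"
proof -
  have i1: "\<not> n - 1 + (m - 1) < n - 1" and i2: "\<not> n - 1 + (m - 1) < n - 1 + (m - 1)" by auto
  show ?thesis using assms unfolding hh_coord_def if_not_P[OF i1] if_not_P[OF i2] by simp
qed

lemma hh_coord_diff: "hh_coord (\<lambda>f. D f - E f) i = hh_coord D i - hh_coord E i"
proof -
  have if_diff: "(if P then a else b) - (if P then c else d) = (if P then a - c else b - d)"
    for P and a b c d :: 'a
    by simp
  show ?thesis
    unfolding hh_coord_def beta_e2_coeff_def by (simp only: minus_apply if_diff add_diff_add diff_self)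
qed

lemma hh_coord_ad: "hh_coord (ad x) i = 0"
proof (cases "i < n - 1")
  case True
  then show ?thesis using ad_beta_diag[of "Suc i" x] by (simp add: hh_coord_def std_def)
next
  case i1: False
  show ?thesis
  proof (cases "i < n - 1 + (m - 1)")
    case True
    then have "ad x (bp (abg True 0 False)) (abg True (Suc (i - (n - 1))) False)
        + ad x (bp (abg False 0 True)) (abg False (Suc (i - (n - 1))) True) = 0"
      using i1 n'_le_n n''_le_n by (intro ad_alpha_gamma_sum) (auto simp: std_def m_def)
    then show ?thesis unfolding hh_coord_def if_not_P[OF i1] if_P[OF True] .
  next
    case False
    have "beta_e2_coeff (ad x) = 0"
      using ad_beta_diag[of 0 x] by (simp add: beta_e2_coeff_def)
    then show ?thesis unfolding hh_coord_def if_not_P[OF i1] if_not_P[OF False] by simp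
  qed
qed

lemma Std_target_source:
  assumes "r \<in> Std"
  shows "ptgt r = 1 \<Longrightarrow> psrc r = 2 \<Longrightarrow> \<exists>k. r = abg True k False \<and> std True k False"
    and "ptgt r = 2 \<Longrightarrow> psrc r = 2 \<Longrightarrow> \<exists>k. r = abg False k False \<and> std False k False"
    and "ptgt r = 2 \<Longrightarrow> psrc r = 3 \<Longrightarrow> \<exists>k. r = abg False k True \<and> std False k True"
  using assms by (auto elim!: Std_cases split: if_splits)

text \<open>A derivation killing \<open>e\<^sub>1, e\<^sub>2, e\<^sub>3\<close> whose coordinates vanish also kills \<open>\<beta>\<close>, since
  \<open>[x, \<beta>]\<close> has no component in the commutative algebra \<open>e\<^sub>2 \<Lambda> e\<^sub>2\<close>.\<close>
lemma is_der_beta_eq_0: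
  fixes D :: "(path \<Rightarrow> 'k::field) \<Rightarrow> path \<Rightarrow> 'k"
  assumes D: "is_der D" and e: "\<And>i. i \<in> {1,2,3} \<Longrightarrow> D (bp (Triv i)) = 0"
    and coord: "\<And>i. hh_coord D i = 0"
  shows "D (bp (abg False 1 False)) = 0"
proof
  fix r
  show "D (bp (abg False 1 False)) r = 0 r"
  proof (rule ccontr)
    assume "D (bp (abg False 1 False)) r \<noteq> 0 r"
    then have nz: "D (bp (abg False 1 False)) r \<noteq> 0" by simp
    then have "r \<in> Std" "ptgt r = 2" "psrc r = 2"
      using is_der_local[OF D e _ nz] by simp_all
    then obtain k where r: "r = abg False k False" and k: "k < n"
      using Std_target_source(2) by (auto simp: std_def)
    have "D (bp (abg False 1 False)) (abg False 0 False) = 0"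
    proof (cases "of_nat (gcd n (gcd n' n'')) = (0::'k)")
      case True
      then show ?thesis using coord hh_coord_e2 by (metis beta_e2_coeff_def)
    qed (use beta_e2_coeff_eq_0[OF D] in \<open>simp add: beta_e2_coeff_def\<close>)
    moreover have "D (bp (abg False 1 False)) (abg False k False) = 0" if "1 \<le> k"
      using coord[of "k - 1"] hh_coord_beta[OF that k, of D] by simp
    ultimately show False using nz r by (cases k) auto
  qed
qed

text \<open>The correction \<open>y = a\<^sub>0 e\<^sub>1 - g\<^sub>0 e\<^sub>3 + \<Sum>\<^sub>1\<^sub>\<le>\<^sub>k\<^sub><\<^sub>n c\<^sub>k \<beta>\<^sup>k\<close>, with \<open>c\<^sub>k = -a\<^sub>k\<close> for \<open>k < n'\<close> and
  \<open>c\<^sub>k = g\<^sub>k\<close> otherwise: \<open>[y, \<beta>] = 0\<close>, and \<open>[y, \<alpha>]\<close>, \<open>[y, \<gamma>]\<close> have coefficients \<open>a\<close>, \<open>g\<close>.\<close>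
definition corr :: "(nat \<Rightarrow> 'k::field) \<Rightarrow> (nat \<Rightarrow> 'k) \<Rightarrow> path \<Rightarrow> 'k" where
  "corr a g = (\<lambda>r. if r = Triv 1 then a 0 else if r = Triv 3 then - g 0
      else if r \<in> Std \<and> \<not> has_alpha r \<and> \<not> has_gamma r \<and> 1 \<le> beta_deg r
      then (if beta_deg r < n' then - a (beta_deg r) else g (beta_deg r)) else 0)"

lemma corr_simps [simp]:
  "on_Std (corr a g)"
  "corr a g (Triv 1) = a 0" "corr a g (Triv (Suc 0)) = a 0" "corr a g (Triv 3) = - g 0"
  "corr a g (abg True k g') = 0" "corr a g (abg a' k True) = 0"
  "corr a g (abg False k False) = (if 1 \<le> k \<and> k < n then (if k < n' then - a k else g k) else 0)"
  by (auto simp: corr_def on_Std_def std_def)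

lemma ad_corr_Triv: "i \<in> {1,2,3} \<Longrightarrow> ad (corr a g) (bp (Triv i)) = 0"
proof
  fix r assume i: "i \<in> {1,2,3}"
  show "ad (corr a g) (bp (Triv i)) r = 0 r"
  proof (cases "r \<in> Std")
    case False
    then show ?thesis using on_Std_ad[of "corr a g" "bp (Triv i)"] by (simp add: on_Std_def)
  next
    case True
    then have "ad (corr a g) (bp (Triv i)) r
        = (if psrc r = i then corr a g r else 0) - (if ptgt r = i then corr a g r else 0)"
      using i by (simp add: ad_def tmul_Triv_right tmul_Triv_left Triv_in_StdI)
    also have "\<dots> = 0"
      using True by (elim Std_cases) auto
    finally show ?thesis by simp
  qed
qed

lemma ad_corr_beta: "ad (corr a g) (bp (abg False 1 False)) = 0"
proof
  fix r
  show "ad (corr a g) (bp (abg False 1 False)) r = 0 r"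
  proof (cases "r \<in> Std")
    case False
    then show ?thesis using on_Std_ad[of "corr a g" "bp (abg False 1 False)"] by (simp add: on_Std_def)
  next
    case True
    then show ?thesis
    proof (cases rule: Std_cases)
      case (abg a' k g')
      then show ?thesis
        by (cases a'; cases g') (simp_all add: ad_def tmul_beta_gamma_right tmul_alpha_beta_left)
    qed (simp_all add: ad_def tmul_beta_gamma_right_Triv tmul_alpha_beta_left_Triv)
  qed
qed

lemma ad_corr_alpha:
  "std True k False \<Longrightarrow> ad (corr a g) (bp (abg True 0 False)) (abg True k False) = a k"
  using n'_le_n by (cases k) (simp_all add: ad_def tmul_alpha_right tmul_alpha_beta_left std_def)

lemma ad_corr_alpha_other:
  "r \<in> Std \<Longrightarrow> \<forall>k. r \<noteq> abg True k False \<Longrightarrow> ad (corr a g) (bp (abg True 0 False)) r = 0"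
  by (elim Std_cases) (auto simp: ad_def tmul_alpha_right tmul_alpha_beta_left_Triv tmul_alpha_beta_left)

lemma ad_corr_gamma:
  assumes ag: "\<And>k. 1 \<le> k \<Longrightarrow> k < m \<Longrightarrow> a k + g k = 0" and k: "std False k True"
  shows "ad (corr a g) (bp (abg False 0 True)) (abg False k True) = g k"
proof -
  have "ad (corr a g) (bp (abg False 0 True)) (abg False k True)
      = corr a g (abg False k False) - (if k = 0 then corr a g (Triv 3) else 0)"
    using k by (simp add: ad_def tmul_beta_gamma_right tmul_gamma_left)
  also have "\<dots> = g k"
    using k ag[of k] by (auto simp: std_def m_def add_eq_0_iff2)
  finally show ?thesis .
qed

lemma ad_corr_gamma_other:
  "r \<in> Std \<Longrightarrow> \<forall>k. r \<noteq> abg False k True \<Longrightarrow> ad (corr a g) (bp (abg False 0 True)) r = 0"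
  by (elim Std_cases) (auto simp: ad_def tmul_beta_gamma_right_Triv tmul_beta_gamma_right tmul_gamma_left)

lemma is_der_alpha_eq_ad_corr:
  fixes D :: "(path \<Rightarrow> 'k::field) \<Rightarrow> path \<Rightarrow> 'k"
  assumes D: "is_der D" and e: "\<And>i. i \<in> {1,2,3} \<Longrightarrow> D (bp (Triv i)) = 0"
  shows "D (bp (abg True 0 False)) = ad (corr (\<lambda>k. D (bp (abg True 0 False)) (abg True k False)) g) (bp (abg True 0 False))"
    (is "?D = ad ?y _")
proof
  fix r
  show "?D r = ad ?y (bp (abg True 0 False)) r"
  proof (cases "r \<in> Std \<and> (\<exists>k. r = abg True k False)")
    case True
    then show ?thesis by (auto simp: ad_corr_alpha)
  next
    case False
    have "?D r = 0"
    proof (rule ccontr)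
      assume "?D r \<noteq> 0"
      from is_der_local[OF D e _ this] have "r \<in> Std" "ptgt r = 1" "psrc r = 2" by simp_all
      with False show False using Std_target_source(1) by blast
    qed
    moreover have "ad ?y (bp (abg True 0 False)) r = 0"
      using False on_Std_ad[of ?y "bp (abg True 0 False)"] ad_corr_alpha_other[of r]
      by (auto simp: on_Std_def)
    ultimately show ?thesis by simp
  qed
qed

lemma is_der_gamma_eq_ad_corr:
  fixes D :: "(path \<Rightarrow> 'k::field) \<Rightarrow> path \<Rightarrow> 'k"
  assumes D: "is_der D" and e: "\<And>i. i \<in> {1,2,3} \<Longrightarrow> D (bp (Triv i)) = 0"
    and ag: "\<And>k. 1 \<le> k \<Longrightarrow> k < m \<Longrightarrow> a k + D (bp (abg False 0 True)) (abg False k True) = 0"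
  shows "D (bp (abg False 0 True)) = ad (corr a (\<lambda>k. D (bp (abg False 0 True)) (abg False k True))) (bp (abg False 0 True))"
    (is "?D = ad ?y _")
proof
  fix r
  show "?D r = ad ?y (bp (abg False 0 True)) r"
  proof (cases "r \<in> Std \<and> (\<exists>k. r = abg False k True)")
    case True
    then show ?thesis using ag by (auto simp: ad_corr_gamma)
  next
    case False
    have "?D r = 0"
    proof (rule ccontr)
      assume "?D r \<noteq> 0"
      from is_der_local[OF D e _ this] have "r \<in> Std" "ptgt r = 2" "psrc r = 3" by simp_all
      with False show False using Std_target_source(3) by blast
    qed
    moreover have "ad ?y (bp (abg False 0 True)) r = 0"
      using False on_Std_ad[of ?y "bp (abg False 0 True)"] ad_corr_gamma_other[of r]
      by (auto simp: on_Std_def)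
    ultimately show ?thesis by simp
  qed
qed

text \<open>First subtract the inner derivation matching \<open>D\<close> on the idempotents; the remainder \<open>D'\<close>
  kills \<open>\<beta>\<close>, and its values on \<open>\<alpha>\<close> and \<open>\<gamma>\<close> are matched by a correction \<open>corr\<close>.\<close>
theorem is_der_inner_if_hh_coord_zero:
  fixes D :: "(path \<Rightarrow> 'k::field) \<Rightarrow> path \<Rightarrow> 'k"
  assumes D: "is_der D" and coord: "\<And>i. hh_coord D i = 0"
  obtains x where "on_Std x" "\<And>f. on_Std f \<Longrightarrow> D f = ad x f"
proof -
  define x0 where "x0 = idem_corr D"
  define D' where "D' = (\<lambda>f. D f - ad x0 f)"
  have D': "is_der D'" unfolding D'_def using D is_der_ad by (rule is_der_diff)
  have e: "D' (bp (Triv i)) = 0" if "i \<in> {1,2,3}" for i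
    using is_der_Triv_eq_ad[OF D that] by (simp add: D'_def x0_def)
  have coord': "hh_coord D' i = 0" for i
    using coord by (simp add: D'_def hh_coord_diff hh_coord_ad)
  define a where "a = (\<lambda>k. D' (bp (abg True 0 False)) (abg True k False))"
  define g where "g = (\<lambda>k. D' (bp (abg False 0 True)) (abg False k True))"
  have ag: "a k + g k = 0" if "1 \<le> k" "k < m" for k
    using coord'[of "n - 1 + (k - 1)"] hh_coord_alpha_gamma[OF that, of D'] by (simp add: a_def g_def)
  define y where "y = corr a g"
  have "D' f = ad y f" if "on_Std f" for f
  proof (rule is_der_eq_ad_of_generators[OF D' _ _ _ _ that])
    show "D' (bp (Triv i)) = ad y (bp (Triv i))" if "i \<in> {1,2,3}" for i
      using e[OF that] ad_corr_Triv[OF that] by (simp add: y_def)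
    show "D' (bp (abg False 1 False)) = ad y (bp (abg False 1 False))"
      using is_der_beta_eq_0[OF D' e coord'] ad_corr_beta[of a g] by (simp add: y_def)
    show "D' (bp (abg True 0 False)) = ad y (bp (abg True 0 False))"
      using is_der_alpha_eq_ad_corr[OF D' e] by (simp add: y_def a_def)
    show "D' (bp (abg False 0 True)) = ad y (bp (abg False 0 True))"
      using is_der_gamma_eq_ad_corr[OF D' e] ag by (simp add: y_def g_def)
  qed
  then have "D f = ad (x0 + y) f" if "on_Std f" for f
    using that by (simp add: D'_def ad_add_left algebra_simps)
  moreover have "on_Std (x0 + y)" by (simp add: x0_def y_def)
  ultimately show thesis using that by blast
qed

section \<open>Outer derivations\<close>

definition lin_map :: "(path \<Rightarrow> path \<Rightarrow> 'k::field) \<Rightarrow> (path \<Rightarrow> 'k) \<Rightarrow> path \<Rightarrow> 'k" where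
  "lin_map K f = (\<lambda>r. \<Sum>p\<in>Std. f p * K p r)"

lemma lin_map_tmul:
  fixes K :: "path \<Rightarrow> path \<Rightarrow> 'k::field"
  assumes KG: "\<And>p r. r \<notin> Std \<Longrightarrow> K p r = 0"
    and B: "\<And>u v r. u \<in> Std \<Longrightarrow> v \<in> Std \<Longrightarrow> r \<in> Std \<Longrightarrow>
      (\<Sum>w\<in>Std. mcoef u v w * K w r) = (\<Sum>p\<in>Std. K u p * mcoef p v r) + (\<Sum>q\<in>Std. K v q * mcoef u q r)"
  shows "lin_map K (f \<star> g) r = (lin_map K f \<star> g) r + (f \<star> lin_map K g) r"
proof (cases "r \<in> Std")
  case False
  then show ?thesis by (simp add: lin_map_def KG tmul_def mcoef_notin_Std)
next
  case True
  have L: "lin_map K (f \<star> g) r = (\<Sum>u\<in>Std. \<Sum>v\<in>Std. f u * g v * (\<Sum>w\<in>Std. mcoef u v w * K w r))"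
  proof -
    have "lin_map K (f \<star> g) r = (\<Sum>w\<in>Std. \<Sum>u\<in>Std. \<Sum>v\<in>Std. f u * g v * (mcoef u v w * K w r))"
      by (simp add: lin_map_def tmul_def sum_distrib_right mult.assoc)
    also have "\<dots> = (\<Sum>u\<in>Std. \<Sum>v\<in>Std. \<Sum>w\<in>Std. f u * g v * (mcoef u v w * K w r))" by (rule sum_rotate3)
    also have "\<dots> = (\<Sum>u\<in>Std. \<Sum>v\<in>Std. f u * g v * (\<Sum>w\<in>Std. mcoef u v w * K w r))"
      by (simp add: sum_distrib_left)
    finally show ?thesis .
  qed
  have R1: "(lin_map K f \<star> g) r = (\<Sum>u\<in>Std. \<Sum>v\<in>Std. f u * g v * (\<Sum>p\<in>Std. K u p * mcoef p v r))"
  proof -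
    have "(lin_map K f \<star> g) r = (\<Sum>p\<in>Std. \<Sum>v\<in>Std. \<Sum>u\<in>Std. f u * g v * (K u p * mcoef p v r))"
      by (simp add: lin_map_def tmul_def sum_distrib_right sum_distrib_left mult_ac)
    also have "\<dots> = (\<Sum>p\<in>Std. \<Sum>u\<in>Std. \<Sum>v\<in>Std. f u * g v * (K u p * mcoef p v r))"
      by (rule sum.cong[OF refl], rule sum.swap)
    also have "\<dots> = (\<Sum>u\<in>Std. \<Sum>v\<in>Std. \<Sum>p\<in>Std. f u * g v * (K u p * mcoef p v r))" by (rule sum_rotate3)
    also have "\<dots> = (\<Sum>u\<in>Std. \<Sum>v\<in>Std. f u * g v * (\<Sum>p\<in>Std. K u p * mcoef p v r))"
      by (simp add: sum_distrib_left)
    finally show ?thesis .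
  qed
  have R2: "(f \<star> lin_map K g) r = (\<Sum>u\<in>Std. \<Sum>v\<in>Std. f u * g v * (\<Sum>q\<in>Std. K v q * mcoef u q r))"
  proof -
    have "(f \<star> lin_map K g) r = (\<Sum>u\<in>Std. \<Sum>q\<in>Std. \<Sum>v\<in>Std. f u * g v * (K v q * mcoef u q r))"
      by (simp add: lin_map_def tmul_def sum_distrib_right sum_distrib_left mult_ac)
    also have "\<dots> = (\<Sum>u\<in>Std. \<Sum>v\<in>Std. \<Sum>q\<in>Std. f u * g v * (K v q * mcoef u q r))"
      by (rule sum.cong[OF refl], rule sum.swap)
    also have "\<dots> = (\<Sum>u\<in>Std. \<Sum>v\<in>Std. f u * g v * (\<Sum>q\<in>Std. K v q * mcoef u q r))"
      by (simp add: sum_distrib_left)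
    finally show ?thesis .
  qed
  show ?thesis unfolding L R1 R2
    by (simp add: B True distrib_left sum.distrib)
qed

lemma is_der_lin_map:
  fixes K :: "path \<Rightarrow> path \<Rightarrow> 'k::field"
  assumes KG: "\<And>p r. r \<notin> Std \<Longrightarrow> K p r = 0"
    and B: "\<And>u v r. u \<in> Std \<Longrightarrow> v \<in> Std \<Longrightarrow> r \<in> Std \<Longrightarrow>
      (\<Sum>w\<in>Std. mcoef u v w * K w r) = (\<Sum>p\<in>Std. K u p * mcoef p v r) + (\<Sum>q\<in>Std. K v q * mcoef u q r)"
  shows "is_der (lin_map K)"
  unfolding is_der_def
proof (intro conjI allI impI)
  fix f :: "path \<Rightarrow> 'k" show "on_Std (lin_map K f)" by (simp add: on_Std_def lin_map_def KG)
next
  fix f g :: "path \<Rightarrow> 'k" show "lin_map K (f + g) = lin_map K f + lin_map K g"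
    by (simp add: lin_map_def fun_eq_iff distrib_right sum.distrib)
next
  fix c and f :: "path \<Rightarrow> 'k" show "lin_map K (scale c f) = scale c (lin_map K f)"
    by (simp add: lin_map_def fun_eq_iff scale_def sum_distrib_left mult.assoc)
next
  fix f g :: "path \<Rightarrow> 'k" show "lin_map K (f \<star> g) = (lin_map K f \<star> g) + (f \<star> lin_map K g)"
    using lin_map_tmul[OF KG B] by (simp add: fun_eq_iff)
qed

lemma lin_map_bp: "q \<in> Std \<Longrightarrow> lin_map K (bp q) r = K q r"
proof -
  assume q: "q \<in> Std"
  have "lin_map K (bp q) r = (\<Sum>p\<in>Std. if p = q then K q r else 0)"
    unfolding lin_map_def by (intro sum.cong) (auto simp: bp_def)
  then show ?thesis using q by simp
qed

definition shift :: "(nat \<Rightarrow> nat) \<Rightarrow> path \<Rightarrow> path" where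
  "shift \<phi> p = abg (has_alpha p) (\<phi> (beta_deg p)) (has_gamma p)"

text \<open>The kernel of the linear map sending a basis path \<open>p\<close> to \<open>wt p\<close> times the path
  obtained from \<open>p\<close> by replacing \<open>\<beta>\<^sup>k\<close> with \<open>\<beta>\<^sup>\<phi>\<^sup>k\<close> (or to \<open>0\<close> if that path is not in \<open>Std\<close>).\<close>
definition wshift :: "(path \<Rightarrow> 'k::field) \<Rightarrow> (nat \<Rightarrow> nat) \<Rightarrow> path \<Rightarrow> path \<Rightarrow> 'k" where
  "wshift wt \<phi> p r = (if r = shift \<phi> p \<and> r \<in> Std then wt p else 0)"

lemma shift_abg [simp]: "shift \<phi> (abg a k g) = abg a (\<phi> k) g"
  by (simp add: shift_def)

lemma wshift_notin_Std: "r \<notin> Std \<Longrightarrow> wshift wt \<phi> p r = 0"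
  by (simp add: wshift_def)

lemma sum_wshift:
  "(\<Sum>p\<in>Std. wshift wt \<phi> u p * X p) = wt u * (if shift \<phi> u \<in> Std then X (shift \<phi> u) else 0)"
proof -
  have "(\<Sum>p\<in>Std. wshift wt \<phi> u p * X p) = (\<Sum>p\<in>Std. if shift \<phi> u = p then wt u * X p else 0)"
    by (intro sum.cong) (auto simp: wshift_def)
  then show ?thesis by simp
qed

lemma wshift_leibniz_abg:
  fixes wt :: "path \<Rightarrow> 'k::field"
  assumes wt_add: "wt (abg a (k + k') g) = wt (abg a k False) + wt (abg False k' g)"
    and \<phi>_left: "wt (abg a k False) \<noteq> 0 \<Longrightarrow> \<phi> (k + k') = \<phi> k + k'"
    and \<phi>_right: "wt (abg False k' g) \<noteq> 0 \<Longrightarrow> \<phi> (k + k') = k + \<phi> k'"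
    and wt_boundary: "\<not> std a (k + k') g \<Longrightarrow> std a (\<phi> (k + k')) g \<Longrightarrow> wt (abg a (k + k') g) = 0"
    and r: "r \<in> Std"
  shows "(if std a (k + k') g then wshift wt \<phi> (abg a (k + k') g) r else 0)
    = wt (abg a k False) * (if std a (\<phi> k) False then mcoef (abg a (\<phi> k) False) (abg False k' g) r else 0)
      + wt (abg False k' g) * (if std False (\<phi> k') g then mcoef (abg a k False) (abg False (\<phi> k') g) r else 0)"
proof -
  let ?I = "(if r = abg a (\<phi> (k + k')) g then 1 else 0) :: 'k"
  have "(if std a (k + k') g then wshift wt \<phi> (abg a (k + k') g) r else 0) = wt (abg a (k + k') g) * ?I"
    using r wt_boundary by (auto simp: wshift_def)
  also have "\<dots> = wt (abg a k False) * ?I + wt (abg False k' g) * ?I"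
    by (simp add: wt_add distrib_right)
  also have "wt (abg a k False) * ?I
      = wt (abg a k False) * (if std a (\<phi> k) False then mcoef (abg a (\<phi> k) False) (abg False k' g) r else 0)"
    using r \<phi>_left by (cases "wt (abg a k False) = 0") (auto simp: mcoef_def dest: std_prefix)
  also have "wt (abg False k' g) * ?I
      = wt (abg False k' g) * (if std False (\<phi> k') g then mcoef (abg a k False) (abg False (\<phi> k') g) r else 0)"
    using r \<phi>_right by (cases "wt (abg False k' g) = 0") (auto simp: mcoef_def dest: std_suffix)
  finally show ?thesis .
qed

lemma wshift_leibniz:
  fixes wt :: "path \<Rightarrow> 'k::field"
  assumes wt_Triv: "wt (Triv 1) = 0" "wt (Triv 3) = 0"
    and wt_add: "\<And>a k k' g. wt (abg a (k + k') g) = wt (abg a k False) + wt (abg False k' g)"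
    and \<phi>_left: "\<And>a k k'. wt (abg a k False) \<noteq> 0 \<Longrightarrow> \<phi> (k + k') = \<phi> k + k'"
    and \<phi>_right: "\<And>k k' g. wt (abg False k' g) \<noteq> 0 \<Longrightarrow> \<phi> (k + k') = k + \<phi> k'"
    and wt_boundary: "\<And>a k g. \<not> std a k g \<Longrightarrow> std a (\<phi> k) g \<Longrightarrow> wt (abg a k g) = 0"
    and u: "u \<in> Std" and v: "v \<in> Std" and r: "r \<in> Std"
  shows "(\<Sum>w\<in>Std. mcoef u v w * wshift wt \<phi> w r)
    = (\<Sum>p\<in>Std. wshift wt \<phi> u p * mcoef p v r) + (\<Sum>q\<in>Std. wshift wt \<phi> v q * mcoef u q r)"
proof -
  have wt_e1: "wt (Triv (Suc 0)) = 0" using wt_Triv(1) by simp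
  have "(case pmul u v of None \<Rightarrow> 0 | Some w \<Rightarrow> if w \<in> Std then wshift wt \<phi> w r else 0)
     = wt u * (if shift \<phi> u \<in> Std then mcoef (shift \<phi> u) v r else 0)
       + wt v * (if shift \<phi> v \<in> Std then mcoef u (shift \<phi> v) r else 0)"
    using u v
  proof (cases rule: Std_cases[case_product Std_cases])
    case (abg_abg a k g a' k' g')
    show ?thesis
    proof (cases "\<not> g \<and> \<not> a'")
      case True
      then show ?thesis
        using abg_abg wshift_leibniz_abg[OF wt_add \<phi>_left \<phi>_right wt_boundary r] by simp
    qed (auto simp: abg_abg mcoef_def)
  qed (auto simp: mcoef_def wshift_def wt_Triv wt_e1)
  then show ?thesis unfolding sum_mcoef_left sum_wshift by simp
qed

lemma is_der_wshift:
  fixes wt :: "path \<Rightarrow> 'k::field"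
  assumes "wt (Triv 1) = 0" "wt (Triv 3) = 0"
    and "\<And>a k k' g. wt (abg a (k + k') g) = wt (abg a k False) + wt (abg False k' g)"
    and "\<And>a k k'. wt (abg a k False) \<noteq> 0 \<Longrightarrow> \<phi> (k + k') = \<phi> k + k'"
    and "\<And>k k' g. wt (abg False k' g) \<noteq> 0 \<Longrightarrow> \<phi> (k + k') = k + \<phi> k'"
    and "\<And>a k g. \<not> std a k g \<Longrightarrow> std a (\<phi> k) g \<Longrightarrow> wt (abg a k g) = 0"
  shows "is_der (lin_map (wshift wt \<phi>))"
  by (rule is_der_lin_map[OF wshift_notin_Std wshift_leibniz[OF assms]])

text \<open>Three families of derivations: \<open>lin_map (K_shift s)\<close> maps \<open>\<beta> \<mapsto> \<beta>\<^sup>s\<^sup>+\<^sup>1\<close> and kills \<open>\<alpha>, \<gamma>\<close>;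
  \<open>lin_map (K_alpha j)\<close> maps \<open>\<alpha> \<mapsto> \<alpha>\<beta>\<^sup>j\<close> and kills \<open>\<beta>, \<gamma>\<close>; \<open>lin_map K_lower\<close> maps \<open>\<beta> \<mapsto> e\<^sub>2\<close>,
  and is a derivation only when \<open>char k\<close> divides all the truncation degrees \<open>n, n', n'', t\<close>.\<close>
definition K_shift :: "nat \<Rightarrow> path \<Rightarrow> path \<Rightarrow> 'k::field" where
  "K_shift s = wshift (\<lambda>p. of_nat (beta_deg p)) (\<lambda>k. k + s)"

definition K_alpha :: "nat \<Rightarrow> path \<Rightarrow> path \<Rightarrow> 'k::field" where
  "K_alpha j = wshift (\<lambda>p. if has_alpha p then 1 else 0) (\<lambda>k. k + j)"

definition K_lower :: "path \<Rightarrow> path \<Rightarrow> 'k::field" where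
  "K_lower = wshift (\<lambda>p. of_nat (beta_deg p)) (\<lambda>k. k - 1)"

lemma is_der_K_shift: "is_der (lin_map (K_shift s))"
  unfolding K_shift_def by (rule is_der_wshift) (auto dest: std_add)

lemma is_der_K_alpha: "is_der (lin_map (K_alpha j))"
  unfolding K_alpha_def by (rule is_der_wshift) (auto dest: std_add)

lemma of_nat_std_boundary:
  assumes char: "of_nat (gcd n (gcd n' n'')) = (0::'k::field)"
    and "\<not> std a k g" "std a (k - 1) g"
  shows "of_nat k = (0::'k)"
proof -
  have "k = n \<or> k = n' \<or> k = n'' \<or> k = t"
    using assms(2,3) by (cases k) (auto simp: std_def)
  moreover have "gcd n (gcd n' n'') dvd n" "gcd n (gcd n' n'') dvd n'" "gcd n (gcd n' n'') dvd n''"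
    by (auto intro: dvd_trans)
  ultimately have "gcd n (gcd n' n'') dvd k" using gcd_dvd_t by blast
  with char show ?thesis by (metis dvdE mult_zero_left of_nat_mult)
qed

lemma is_der_K_lower:
  assumes char: "of_nat (gcd n (gcd n' n'')) = (0::'k::field)"
  shows "is_der (lin_map (K_lower :: path \<Rightarrow> path \<Rightarrow> 'k))"
proof -
  have pos: "0 < k" if "of_nat k \<noteq> (0::'k)" for k
    using that by (cases k) auto
  show ?thesis unfolding K_lower_def
  proof (rule is_der_wshift)
    fix a k g assume "\<not> std a k g" "std a (k - 1) g"
    then show "of_nat (beta_deg (abg a k g)) = (0::'k)" using of_nat_std_boundary[OF char] by simp
  qed (auto dest: pos)
qed

lemma lin_map_generators:
  "lin_map K (bp (abg False 1 False)) r = K (abg False 1 False) r"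
  "lin_map K (bp (abg True 0 False)) r = K (abg True 0 False) r"
  "lin_map K (bp (abg False 0 True)) r = K (abg False 0 True) r"
  by (simp_all add: lin_map_bp)

lemma hh_coord_K_shift:
  assumes s: "s < n - 1"
  shows "hh_coord (lin_map (K_shift s) :: (path \<Rightarrow> 'k::field) \<Rightarrow> _) i = (if i = s then 1 else 0)"
proof (cases "i < n - 1")
  case True
  then have "std False (Suc i) False" by (simp add: std_def)
  then show ?thesis
    using True unfolding hh_coord_def lin_map_generators by (simp add: K_shift_def wshift_def)
next
  case False
  then show ?thesis
    using s unfolding hh_coord_def beta_e2_coeff_def lin_map_generators by (auto simp: K_shift_def wshift_def)
qed

lemma hh_coord_K_alpha:
  assumes j: "1 \<le> j" "j < m"
  shows "hh_coord (lin_map (K_alpha j) :: (path \<Rightarrow> 'k::field) \<Rightarrow> _) i = (if i = n - 1 + (j - 1) then 1 else 0)"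
proof (cases "\<not> i < n - 1 \<and> i < n - 1 + (m - 1)")
  case True
  have "std True j False" using j n'_le_n by (simp add: std_def m_def)
  moreover have "(Suc (i - (n - 1)) = j) = (i = n - 1 + (j - 1))" using True j by auto
  ultimately show ?thesis
    using True unfolding hh_coord_def lin_map_generators by (auto simp: K_alpha_def wshift_def)
next
  case False
  then have "i \<noteq> n - 1 + (j - 1)" using j by auto
  moreover have "K_alpha j (abg False 1 False) r = (0::'k)" for r
    by (simp add: K_alpha_def wshift_def)
  ultimately show ?thesis
    using False unfolding hh_coord_def beta_e2_coeff_def lin_map_generators by auto
qed

lemma hh_coord_K_lower:
  assumes "of_nat (gcd n (gcd n' n'')) = (0::'k::field)"
  shows "hh_coord (lin_map K_lower :: (path \<Rightarrow> 'k) \<Rightarrow> _) i = (if i = n - 1 + (m - 1) then 1 else 0)"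
  using assms unfolding hh_coord_def beta_e2_coeff_def lin_map_generators
  by (auto simp: K_lower_def wshift_def)

section \<open>Inner derivations of \<open>\<Lambda>\<close>\<close>

lemma hh_coord_cong: "(\<And>q. q \<in> Std \<Longrightarrow> D (bp q) = E (bp q)) \<Longrightarrow> hh_coord D = hh_coord E"
proof -
  assume "\<And>q. q \<in> Std \<Longrightarrow> D (bp q) = E (bp q)"
  then have "D (bp (abg False 1 False)) = E (bp (abg False 1 False))"
    "D (bp (abg True 0 False)) = E (bp (abg True 0 False))"
    "D (bp (abg False 0 True)) = E (bp (abg False 0 True))"
    by simp_all
  then show ?thesis unfolding hh_coord_def beta_e2_coeff_def by (simp only:)
qed

lemma is_der_cong: "(\<And>f. on_Std f \<Longrightarrow> D f = E f) \<Longrightarrow> is_der E \<Longrightarrow> is_der D"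
  by (simp add: is_der_def)

lemma tmul_sum_left: "(\<lambda>r. \<Sum>j<(L::nat). c j * F j r) \<star> g = (\<lambda>r. \<Sum>j<L. c j * (F j \<star> g) r)"
proof (induction L)
  case (Suc L)
  have e: "(\<lambda>r. \<Sum>j<Suc L. c j * F j r) = (\<lambda>r. \<Sum>j<L. c j * F j r) + scale (c L) (F L)"
    by (simp add: fun_eq_iff scale_def)
  show ?case unfolding e tmul_add_left tmul_scale_left Suc.IH by (simp add: fun_eq_iff scale_def)
qed (simp add: zero_fun_def[symmetric])

lemma tmul_sum_right: "f \<star> (\<lambda>r. \<Sum>j<(L::nat). c j * F j r) = (\<lambda>r. \<Sum>j<L. c j * (f \<star> F j) r)"
proof (induction L)
  case (Suc L)
  have e: "(\<lambda>r. \<Sum>j<Suc L. c j * F j r) = (\<lambda>r. \<Sum>j<L. c j * F j r) + scale (c L) (F L)"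
    by (simp add: fun_eq_iff scale_def)
  show ?case unfolding e tmul_add_right tmul_scale_right Suc.IH by (simp add: fun_eq_iff scale_def)
qed (simp add: zero_fun_def[symmetric])

lemma is_der_sum:
  fixes Ds :: "nat \<Rightarrow> (path \<Rightarrow> 'k::field) \<Rightarrow> path \<Rightarrow> 'k"
  assumes Ds: "\<And>j. j < L \<Longrightarrow> is_der (Ds j)"
  shows "is_der (\<lambda>f r. \<Sum>j<L. c j * Ds j f r)"
  unfolding is_der_def
proof (intro conjI allI impI)
  fix f g :: "path \<Rightarrow> 'k" and d :: 'k
  assume f: "on_Std f"
  show "on_Std (\<lambda>r. \<Sum>j<L. c j * Ds j f r)"
    using is_der_on_Std[OF Ds f] by (simp add: on_Std_def)
  show "(\<lambda>r. \<Sum>j<L. c j * Ds j (scale d f) r) = scale d (\<lambda>r. \<Sum>j<L. c j * Ds j f r)"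
    using is_der_scale[OF Ds f] by (simp add: fun_eq_iff scale_def sum_distrib_left mult_ac)
  assume g: "on_Std g"
  show "(\<lambda>r. \<Sum>j<L. c j * Ds j (f + g) r) = (\<lambda>r. \<Sum>j<L. c j * Ds j f r) + (\<lambda>r. \<Sum>j<L. c j * Ds j g r)"
    using is_der_add[OF Ds f g] by (simp add: fun_eq_iff distrib_left sum.distrib)
  show "(\<lambda>r. \<Sum>j<L. c j * Ds j (f \<star> g) r)
      = (\<lambda>r. \<Sum>j<L. c j * Ds j f r) \<star> g + f \<star> (\<lambda>r. \<Sum>j<L. c j * Ds j g r)"
    using is_der_tmul[OF Ds f g] by (simp add: tmul_sum_left tmul_sum_right fun_eq_iff distrib_left sum.distrib)
qed

lemma hh_coord_sum: "hh_coord (\<lambda>f r. \<Sum>j<(L::nat). c j * Ds j f r) i = (\<Sum>j<L. c j * hh_coord (Ds j) i)"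
proof -
  have sum_if: "(\<Sum>j<L. c j * (if Q then A j else B j)) = (if Q then (\<Sum>j<L. c j * A j) else (\<Sum>j<L. c j * B j))"
    for Q and A B :: "nat \<Rightarrow> 'a"
    by simp
  show ?thesis
    unfolding hh_coord_def beta_e2_coeff_def sum_if
    by (simp only: distrib_left sum.distrib mult_zero_right sum.neutral_const)
qed

definition der_coords :: "((path \<Rightarrow> 'k::field) set \<Rightarrow> (path \<Rightarrow> 'k) set) \<Rightarrow> (path \<Rightarrow> 'k) \<Rightarrow> path \<Rightarrow> 'k" where
  "der_coords Q f = coords (Q (cls f))"

definition der_of :: "((path \<Rightarrow> 'k::field) \<Rightarrow> path \<Rightarrow> 'k) \<Rightarrow> (path \<Rightarrow> 'k) set \<Rightarrow> (path \<Rightarrow> 'k) set" where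
  "der_of D A = cls (D (coords A))"

lemma cls_add: "on_Std f \<Longrightarrow> on_Std g \<Longrightarrow> cls (f + g) = qadd I (cls f) (cls g)"
  and cls_scale: "on_Std f \<Longrightarrow> cls (scale c f) = qsmul I c (cls f)"
  and cls_tmul: "on_Std f \<Longrightarrow> on_Std g \<Longrightarrow> cls (f \<star> g) = qmul I (cls f) (cls g)"
  by (simp_all add: qadd_eq qsmul_eq qmul_eq cls_in_Lam)

lemma derivation_in_Lam: "is_derivation I Q \<Longrightarrow> A \<in> Lam I \<Longrightarrow> Q A \<in> Lam I"
  by (simp add: is_derivation_def)

lemma is_der_der_coords:
  fixes Q :: "(path \<Rightarrow> 'k::field) set \<Rightarrow> (path \<Rightarrow> 'k) set"
  assumes Q: "is_derivation I Q"
  shows "is_der (der_coords Q)"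
  unfolding is_der_def
proof (intro conjI allI impI)
  note Q' = Q[unfolded is_derivation_def]
  fix f g :: "path \<Rightarrow> 'k" and c :: 'k
  show "on_Std (der_coords Q f)" by (simp add: der_coords_def)
  show "on_Std f \<Longrightarrow> on_Std g \<Longrightarrow> der_coords Q (f + g) = der_coords Q f + der_coords Q g"
    using Q' by (simp add: der_coords_def cls_add cls_in_Lam coords_qadd)
  show "on_Std f \<Longrightarrow> der_coords Q (scale c f) = scale c (der_coords Q f)"
    using Q' by (simp add: der_coords_def cls_scale cls_in_Lam coords_qsmul)
  show "on_Std f \<Longrightarrow> on_Std g \<Longrightarrow> der_coords Q (f \<star> g) = der_coords Q f \<star> g + f \<star> der_coords Q g"
    using Q' by (simp add: der_coords_def cls_tmul cls_in_Lam coords_qadd coords_qmul qmul_in_Lam)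
qed

lemma is_derivation_der_of:
  fixes D :: "(path \<Rightarrow> 'k::field) \<Rightarrow> path \<Rightarrow> 'k"
  assumes D: "is_der D"
  shows "is_derivation I (der_of D)"
  unfolding is_derivation_def
proof (intro conjI ballI allI)
  fix A B :: "(path \<Rightarrow> 'k) set" and c :: 'k
  assume A: "A \<in> Lam I"
  show "der_of D A \<in> Lam I"
    by (simp add: der_of_def cls_in_Lam is_der_on_Std[OF D])
  show "der_of D (qsmul I c A) = qsmul I c (der_of D A)"
    using A by (simp add: der_of_def coords_qsmul qsmul_eq cls_in_Lam is_der_on_Std[OF D] is_der_scale[OF D])
  assume B: "B \<in> Lam I"
  show "der_of D (qadd I A B) = qadd I (der_of D A) (der_of D B)"
    using A B by (simp add: der_of_def coords_qadd qadd_eq cls_in_Lam is_der_on_Std[OF D] is_der_add[OF D])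
  show "der_of D (qmul I A B) = qadd I (qmul I (der_of D A) B) (qmul I A (der_of D B))"
    using A B
    by (simp add: der_of_def coords_qmul qmul_eq qadd_eq cls_in_Lam is_der_on_Std[OF D] is_der_tmul[OF D] qmul_in_Lam)
qed

lemma der_coords_der_of: "on_Std f \<Longrightarrow> is_der D \<Longrightarrow> der_coords (der_of D) f = D f"
  by (simp add: der_coords_def der_of_def is_der_on_Std)

lemma der_of_der_coords: "(\<And>A. A \<in> Lam I \<Longrightarrow> Q A \<in> Lam I) \<Longrightarrow> A \<in> Lam I \<Longrightarrow> der_of (der_coords Q) A = Q A"
  by (simp add: der_of_def der_coords_def cls_coords)

lemma is_derivation_if_is_der_coords:
  assumes Q: "\<And>A. A \<in> Lam I \<Longrightarrow> Q A \<in> Lam I" and D: "is_der (der_coords Q)"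
  shows "is_derivation I Q"
  using is_derivation_der_of[OF D]
  unfolding is_derivation_def
  by (simp add: der_of_der_coords[OF Q] qadd_in_Lam qsmul_in_Lam qmul_in_Lam)

lemma is_inner_iff_ad:
  fixes Q :: "(path \<Rightarrow> 'k::field) set \<Rightarrow> (path \<Rightarrow> 'k) set"
  assumes Q: "\<And>A. A \<in> Lam I \<Longrightarrow> Q A \<in> Lam I"
  shows "is_inner I Q \<longleftrightarrow> (\<exists>x. on_Std x \<and> (\<forall>f. on_Std f \<longrightarrow> der_coords Q f = ad x f))"
proof
  assume "is_inner I Q"
  then obtain X where X: "X \<in> Lam I" "\<forall>A\<in>Lam I. Q A = inner_der I X A"
    by (auto simp: is_inner_def)
  then show "\<exists>x. on_Std x \<and> (\<forall>f. on_Std f \<longrightarrow> der_coords Q f = ad x f)"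
    by (intro exI[of _ "coords X"]) (simp add: der_coords_def cls_in_Lam coords_inner_der)
next
  assume "\<exists>x. on_Std x \<and> (\<forall>f. on_Std f \<longrightarrow> der_coords Q f = ad x f)"
  then obtain x where x: "on_Std x" and h: "\<And>f. on_Std f \<Longrightarrow> der_coords Q f = ad x f" by blast
  have "Q A = inner_der I (cls x) A" if A: "A \<in> Lam I" for A
  proof (rule Lam_eqI)
    show "Q A \<in> Lam I" "inner_der I (cls x) A \<in> Lam I"
      using A x Q by (simp_all add: inner_der_in_Lam cls_in_Lam)
    have "coords (Q A) = der_coords Q (coords A)" using A by (simp add: der_coords_def cls_coords)
    also have "\<dots> = coords (inner_der I (cls x) A)" using A x h by (simp add: coords_inner_der cls_in_Lam)
    finally show "coords (Q A) = coords (inner_der I (cls x) A)" .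
  qed
  then show "is_inner I Q" using x by (auto simp: is_inner_def cls_in_Lam)
qed

theorem is_inner_iff_hh_coord_eq_0:
  fixes Q :: "(path \<Rightarrow> 'k::field) set \<Rightarrow> (path \<Rightarrow> 'k) set"
  assumes Q: "is_derivation I Q"
  shows "is_inner I Q \<longleftrightarrow> (\<forall>i. hh_coord (der_coords Q) i = 0)"
proof -
  have QL: "\<And>A. A \<in> Lam I \<Longrightarrow> Q A \<in> Lam I" using derivation_in_Lam[OF Q] .
  show ?thesis
  proof
  assume "is_inner I Q"
  then obtain x where "\<forall>f. on_Std f \<longrightarrow> der_coords Q f = ad x f"
    using is_inner_iff_ad[of Q, OF QL] by blast
  then have "hh_coord (der_coords Q) = hh_coord (ad x)" by (intro hh_coord_cong) simp
  then show "\<forall>i. hh_coord (der_coords Q) i = 0" by (simp add: hh_coord_ad)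
next
  assume "\<forall>i. hh_coord (der_coords Q) i = 0"
  then obtain x where "on_Std x" "\<And>f. on_Std f \<Longrightarrow> der_coords Q f = ad x f"
    using is_der_inner_if_hh_coord_zero[OF is_der_der_coords[OF Q]] by blast
  then show "is_inner I Q"
    using is_inner_iff_ad[of Q, OF QL] by blast
  qed
qed

section \<open>Counting\<close>

lemma qcomb_coords:
  "(\<forall>D\<in>set Ds. \<forall>A\<in>Lam I. D A \<in> Lam I) \<Longrightarrow> length cs = length Ds \<Longrightarrow> A \<in> Lam I \<Longrightarrow>
   qcomb I (zip cs Ds) A \<in> Lam I \<and>
   coords (qcomb I (zip cs Ds) A) = (\<lambda>r. \<Sum>j<length Ds. cs ! j * coords ((Ds ! j) A) r)"
proof (induction Ds arbitrary: cs)
  case Nil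
  then show ?case by (simp add: qzero_in_Lam coords_qzero zero_fun_def)
next
  case (Cons D Ds)
  then obtain c cs' where cs: "cs = c # cs'" "length cs' = length Ds" by (cases cs) auto
  then have IH: "qcomb I (zip cs' Ds) A \<in> Lam I"
    "coords (qcomb I (zip cs' Ds) A) = (\<lambda>r. \<Sum>j<length Ds. cs' ! j * coords ((Ds ! j) A) r)"
    using Cons by simp_all
  have "D A \<in> Lam I" using Cons.prems by simp
  then show ?case
    using IH cs
    by (simp add: qadd_in_Lam qsmul_in_Lam coords_qadd coords_qsmul scale_def fun_eq_iff
        sum.lessThan_Suc_shift del: sum.lessThan_Suc)
qed

lemma qcomb_in_Lam:
  assumes Ds: "\<forall>D\<in>set Ds. is_derivation I D" and cs: "length cs = length Ds" and A: "A \<in> Lam I"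
  shows "qcomb I (zip cs Ds) A \<in> Lam I"
  using qcomb_coords[OF _ cs A] Ds derivation_in_Lam by blast

lemma der_coords_qcomb:
  assumes Ds: "\<forall>D\<in>set Ds. is_derivation I D" and cs: "length cs = length Ds" and f: "on_Std f"
  shows "der_coords (qcomb I (zip cs Ds)) f = (\<lambda>r. \<Sum>j<length Ds. cs ! j * der_coords (Ds ! j) f r)"
proof -
  have "\<forall>D\<in>set Ds. \<forall>A\<in>Lam I. D A \<in> Lam I" using Ds derivation_in_Lam by blast
  then show ?thesis using qcomb_coords[OF _ cs cls_in_Lam[OF f]] by (simp add: der_coords_def)
qed

lemma is_derivation_qcomb:
  assumes Ds: "\<forall>D\<in>set Ds. is_derivation I D" and cs: "length cs = length Ds"
  shows "is_derivation I (qcomb I (zip cs Ds))"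
proof (rule is_derivation_if_is_der_coords)
  show "qcomb I (zip cs Ds) A \<in> Lam I" if "A \<in> Lam I" for A
    using qcomb_in_Lam[OF Ds cs that] .
  have "is_der (\<lambda>f r. \<Sum>j<length Ds. cs ! j * der_coords (Ds ! j) f r)"
    using Ds by (intro is_der_sum is_der_der_coords) simp
  then show "is_der (der_coords (qcomb I (zip cs Ds)))"
    by (rule is_der_cong[rotated]) (rule der_coords_qcomb[OF Ds cs])
qed

lemma hh_coord_qcomb:
  assumes Ds: "\<forall>D\<in>set Ds. is_derivation I D" and cs: "length cs = length Ds"
  shows "hh_coord (der_coords (qcomb I (zip cs Ds))) i = (\<Sum>j<length Ds. cs ! j * hh_coord (der_coords (Ds ! j)) i)"
proof -
  have "hh_coord (der_coords (qcomb I (zip cs Ds))) = hh_coord (\<lambda>f r. \<Sum>j<length Ds. cs ! j * der_coords (Ds ! j) f r)"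
    by (rule hh_coord_cong) (simp add: der_coords_qcomb[OF Ds cs])
  then show ?thesis by (simp add: hh_coord_sum)
qed

definition hh_rank :: "'k::field itself \<Rightarrow> nat" where
  "hh_rank _ = n - 1 + (m - 1) + (if of_nat (gcd n (gcd n' n'')) = (0::'k) then 1 else 0)"

lemma hh_coord_ge_rank: "hh_rank TYPE('k::field) \<le> i \<Longrightarrow> hh_coord (D :: (path \<Rightarrow> 'k) \<Rightarrow> path \<Rightarrow> 'k) i = 0"
  unfolding hh_coord_def hh_rank_def by (auto split: if_splits)

lemma indep_length_le:
  assumes ind: "indep_mod_inner (I :: (path \<Rightarrow> 'k::field) set) Ds"
  shows "length Ds \<le> hh_rank TYPE('k)"
proof (rule ccontr)
  assume "\<not> length Ds \<le> hh_rank TYPE('k)"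
  then have "\<exists>c. (\<exists>j\<in>{..<length Ds}. c j \<noteq> 0)
      \<and> (\<forall>i. (\<Sum>j\<in>{..<length Ds}. c j * hh_coord (der_coords (Ds ! j)) i) = (0::'k))"
    by (intro exists_nontrivial_relation[where N = "hh_rank TYPE('k)"]) (simp_all add: hh_coord_ge_rank)
  then obtain c where c: "\<exists>j<length Ds. c j \<noteq> 0"
    "\<And>i. (\<Sum>j<length Ds. c j * hh_coord (der_coords (Ds ! j)) i) = 0"
    by auto
  define cs where "cs = map c [0..<length Ds]"
  have Ds: "\<forall>D\<in>set Ds. is_derivation I D" and cs: "length cs = length Ds"
    using ind by (simp_all add: indep_mod_inner_def cs_def)
  have "hh_coord (der_coords (qcomb I (zip cs Ds))) i = 0" for i
  proof -
    have "hh_coord (der_coords (qcomb I (zip cs Ds))) i = (\<Sum>j<length Ds. c j * hh_coord (der_coords (Ds ! j)) i)"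
      unfolding hh_coord_qcomb[OF Ds cs] by (intro sum.cong) (simp_all add: cs_def)
    then show ?thesis using c(2) by simp
  qed
  then have "is_inner I (qcomb I (zip cs Ds))"
    using is_inner_iff_hh_coord_eq_0[OF is_derivation_qcomb[OF Ds cs]] by simp
  then have "\<forall>a\<in>set cs. a = 0" using ind cs by (simp add: indep_mod_inner_def)
  then show False using c(1) by (auto simp: cs_def)
qed

definition basis_ders :: "'k::field itself \<Rightarrow> ((path \<Rightarrow> 'k) \<Rightarrow> path \<Rightarrow> 'k) list" where
  "basis_ders _ = map (\<lambda>s. lin_map (K_shift s)) [0..<n - 1] @ map (\<lambda>j. lin_map (K_alpha (Suc j))) [0..<m - 1]
     @ (if of_nat (gcd n (gcd n' n'')) = (0::'k) then [lin_map K_lower] else [])"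

lemma length_basis_ders: "length (basis_ders TYPE('k::field)) = hh_rank TYPE('k)"
  by (simp add: basis_ders_def hh_rank_def)

lemma is_der_basis_ders: "D \<in> set (basis_ders TYPE('k::field)) \<Longrightarrow> is_der D"
  by (auto simp: basis_ders_def is_der_K_shift is_der_K_alpha is_der_K_lower split: if_splits)

lemma hh_coord_basis_ders:
  assumes j: "j < hh_rank TYPE('k::field)"
  shows "hh_coord (basis_ders TYPE('k) ! j) i = (if i = j then 1 else 0)"
proof -
  consider (beta) "j < n - 1" | (alpha) "n - 1 \<le> j" "j < n - 1 + (m - 1)"
    | (lower) "j = n - 1 + (m - 1)" "of_nat (gcd n (gcd n' n'')) = (0::'k)"
  proof -
    have "j < n - 1 + (m - 1) \<or> (j = n - 1 + (m - 1) \<and> of_nat (gcd n (gcd n' n'')) = (0::'k))"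
      using j by (cases "of_nat (gcd n (gcd n' n'')) = (0::'k)") (auto simp: hh_rank_def)
    then show ?thesis using that by (cases "j < n - 1") auto
  qed
  then show ?thesis
  proof cases
    case beta
    then show ?thesis by (simp add: basis_ders_def nth_append hh_coord_K_shift)
  next
    case alpha
    then have "j - (n - 1) < m - 1" "\<not> j < n - 1" by auto
    then have "basis_ders TYPE('k) ! j = lin_map (K_alpha (Suc (j - (n - 1))))"
      by (simp add: basis_ders_def nth_append)
    moreover have "Suc (j - (n - 1)) < m" using alpha by auto
    ultimately show ?thesis using alpha by (simp add: hh_coord_K_alpha)
  next
    case lower
    then have "basis_ders TYPE('k) ! j = lin_map K_lower" by (simp add: basis_ders_def nth_append)
    then show ?thesis using lower by (simp add: hh_coord_K_lower)
  qed
qed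

lemma indep_basis_ders: "indep_mod_inner (I :: (path \<Rightarrow> 'k::field) set) (map der_of (basis_ders TYPE('k)))"
proof -
  let ?Ds = "map der_of (basis_ders TYPE('k))"
  have Ds: "\<forall>D\<in>set ?Ds. is_derivation I D"
    using is_der_basis_ders is_derivation_der_of by auto
  have coord: "hh_coord (der_coords (der_of (basis_ders TYPE('k) ! j))) i = (if i = j then 1 else 0)"
    if "j < hh_rank TYPE('k)" for i j
  proof -
    have "hh_coord (der_coords (der_of (basis_ders TYPE('k) ! j))) = hh_coord (basis_ders TYPE('k) ! j)"
      using that is_der_basis_ders[of "basis_ders TYPE('k) ! j"]
      by (intro hh_coord_cong) (simp add: der_coords_der_of length_basis_ders)
    then show ?thesis using that by (simp add: hh_coord_basis_ders)
  qed
  have "cs ! i = 0"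
    if cs: "length cs = length ?Ds" and inner: "is_inner I (qcomb I (zip cs ?Ds))" and i: "i < length cs"
    for cs :: "'k list" and i
  proof -
    have "0 = hh_coord (der_coords (qcomb I (zip cs ?Ds))) i"
      using inner is_inner_iff_hh_coord_eq_0[OF is_derivation_qcomb[OF Ds cs]] by simp
    also have "\<dots> = (\<Sum>j<length ?Ds. cs ! j * (if i = j then 1 else 0))"
      unfolding hh_coord_qcomb[OF Ds cs] by (intro sum.cong) (simp_all add: coord length_basis_ders)
    also have "\<dots> = cs ! i" using i cs by (simp add: if_distrib[of "\<lambda>x. _ * x"] cong: if_cong)
    finally show ?thesis by simp
  qed
  with Ds show ?thesis by (auto simp: indep_mod_inner_def in_set_conv_nth)
qed

theorem HH1_dim_eq:
  "HH1_finite_dim (I :: (path \<Rightarrow> 'k::field) set) \<and> HH1_dim (I :: (path \<Rightarrow> 'k) set) = hh_rank TYPE('k)"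
proof -
  let ?S = "{length Ds | Ds. indep_mod_inner (I :: (path \<Rightarrow> 'k) set) Ds}"
  have ub: "\<forall>x\<in>?S. x \<le> hh_rank TYPE('k)" using indep_length_le by blast
  have "hh_rank TYPE('k) \<in> ?S"
    using indep_basis_ders length_basis_ders by (metis (mono_tags, lifting) length_map mem_Collect_eq)
  with ub have "bdd_above ?S" "Sup ?S = hh_rank TYPE('k)"
    by (auto simp: bdd_above_def intro!: cSup_eq_maximum)
  then show ?thesis by (simp add: HH1_finite_dim_def HH1_dim_def)
qed

end

theorem mainTheorem8:
  fixes n n' n'' d :: nat and V :: "'k::field poly set"
  assumes "2 \<le> n" and "1 \<le> n'" and "n' \<le> n" and "1 \<le> n''" and "n'' \<le> n"
    and "d \<le> min n' n''"
    and "V = {v. [:0, 1:] ^ (min n' n'' - d) dvd v}"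
    and "gcd n (gcd n' n'') dvd d"
  shows "HH1_finite_dim (Iq n n' n'' V)
    \<and> HH1_dim (Iq n n' n'' V)
        = (n - 1) + (min n' n'' - 1) + (if of_nat (gcd n (gcd n' n'')) = (0::'k) then 1 else 0)
    \<and> HH1_dim (Iq n n' n'' V) > 0
    \<and> (min n' n'' = 1 \<longrightarrow> HH1_dim (Iq n n' n'' V) = n - 1)"
proof -
  have "gcd n (gcd n' n'') dvd min n' n''"
    by (simp add: min_def dvd_trans[OF gcd_dvd2 gcd_dvd1] dvd_trans[OF gcd_dvd2 gcd_dvd2])
  then interpret monomial_Lambda n n' n'' "min n' n'' - d"
    using assms(1-5,8) by unfold_locales (auto intro: dvd_diff_nat)
  have I: "Iq n n' n'' V = I" by (simp add: I_def Vt_def assms(7))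
  have rank: "hh_rank TYPE('k) = (n - 1) + (min n' n'' - 1) + (if of_nat (gcd n (gcd n' n'')) = (0::'k) then 1 else 0)"
    by (simp add: hh_rank_def m_def)
  have "min n' n'' = 1 \<Longrightarrow> gcd n (gcd n' n'') = 1"
    by (metis gcd.commute gcd_1_nat min_def)
  then show ?thesis
    using HH1_dim_eq[where 'k = 'k] rank assms(1) unfolding I by auto
qed

end
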